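(* For all $(f_1,f_2)\in L^2(\mathbb{T}^3\times\mathbb{R}^3)^2$, \[ \langle L(f_1,f_2),(f_1,f_2)\rangle_{L^2_{x,v}}\le-(n_{10}+n_{20})\Big(\max\{\delta,\omega\}\|(I-P_1,I-P_2)(f_1,f_2)\|^2_{L^2_{x,v}}+\min\{1-\delta,1-\omega\}\|(I-P)(f_1,f_2)\|^2_{L^2_{x,v}}\Big). \]
   Context: $m_1\ge m_2>0$, $n_{10},n_{20}>0$, $0\le\delta<1$, $0\le\omega<1$. $\mu_k(v)=n_{k0}(\frac{m_k}{2\pi})^{3/2}e^{-m_k|v|^2/2}$. Orthonormal functions in $L^2(\mathbb{R}^3_v)$: $e_{k1}=\frac{\sqrt{\mu_k}}{\sqrt{n_{k0}}}$, $e_{ki}=\sqrt{\frac{m_k}{n_{k0}}}v_{i-1}\sqrt{\mu_k}$ ($i=2,3,4$), $e_{k5}=\frac{m_k|v|^2-3}{\sqrt{6n_{k0}}}\sqrt{\mu_k}$; $P_kf=\sum_{i=1}^5\langle f,e_{ki}\rangle_{L^2_v}e_{ki}$ (applied pointwise in $x$), and $(I-P_1,I-P_2)(f_1,f_2)=(f_1-P_1f_1,f_2-P_2f_2)$. $L_{kk}(f_k)=n_{k0}(P_kf_k-f_k)$; $L_{12}(f_1,f_2)=n_{20}(P_1f_1-f_1)+n_{20}\big[(1-\delta)\sum_{i=2}^4(\sqrt{\frac{n_{10}}{n_{20}}}\sqrt{\frac{m_1}{m_2}}\langle f_2,e_{2i}\rangle_{L^2_v}-\langle f_1,e_{1i}\rangle_{L^2_v})e_{1i}+(1-\omega)(\sqrt{\frac{n_{10}}{n_{20}}}\langle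 f_2,e_{25}\rangle_{L^2_v}-\langle f_1,e_{15}\rangle_{L^2_v})e_{15}\big]$; $L_{21}(f_1,f_2)=n_{10}(P_2f_2-f_2)+n_{10}\big[\frac{m_1}{m_2}(1-\delta)\sum_{i=2}^4(\sqrt{\frac{n_{20}}{n_{10}}}\sqrt{\frac{m_2}{m_1}}\langle f_1,e_{1i}\rangle_{L^2_v}-\langle f_2,e_{2i}\rangle_{L^2_v})e_{2i}+(1-\omega)(\sqrt{\frac{n_{20}}{n_{10}}}\langle f_1,e_{15}\rangle_{L^2_v}-\langle f_2,e_{25}\rangle_{L^2_v})e_{25}\big]$; $L(f_1,f_2)=(L_{11}(f_1)+L_{12}(f_1,f_2),\,L_{22}(f_2)+L_{21}(f_1,f_2))$. $P$ is the orthogonal projection in $L^2(\mathbb{R}^3_v)^2$ (applied pointwise in $x$) onto the span of $(\sqrt{\mu_1},0)$, $(0,\sqrt{\mu_2})$, $(m_1v_j\sqrt{\mu_1},m_2v_j\sqrt{\mu_2})$ ($j=1,2,3$), $((m_1|v|^2-3)\sqrt{\mu_1},(m_2|v|^2-3)\sqrt{\mu_2})$. Inner product $\langle(f_1,f_2),(g_1,g_2)\rangle_{L^2_{x,v}}=\int_{\mathbb{T}^3\times\mathbb{R}^3}(f_1g_1+f_2g_2)dvdx$ and associated norm $\|\cdot\|_{L^2_{x,v}}$. *)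

theory Defs
  imports "HOL-Analysis.Analysis"
begin

text \<open>Velocities v are in real^3; the torus T^3 is represented by the unit cube
  (periodic fundamental domain); a function on T^3 x R^3 is a function on real^3 x real^3
  of which only the values on the cube x R^3 matter.\<close>

definition torus_dom :: "((real^3) \<times> (real^3)) set" where
  "torus_dom = {x. \<forall>i. 0 \<le> x $ i \<and> x $ i \<le> 1} \<times> UNIV"

definition Mw :: "real \<Rightarrow> real \<Rightarrow> real^3 \<Rightarrow> real" where
  "Mw m n v = n * (m / (2 * pi)) powr (3/2) * exp (- m * (norm v)\<^sup>2 / 2)"

definition e1 :: "real \<Rightarrow> real \<Rightarrow> real^3 \<Rightarrow> real" where
  "e1 m n v = sqrt (Mw m n v) / sqrt n"

text \<open>emom m n j corresponds to e_{k,j+1} (j = 1,2,3).\<close>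
definition emom :: "real \<Rightarrow> real \<Rightarrow> 3 \<Rightarrow> real^3 \<Rightarrow> real" where
  "emom m n j v = sqrt (m / n) * v $ j * sqrt (Mw m n v)"

definition e5 :: "real \<Rightarrow> real \<Rightarrow> real^3 \<Rightarrow> real" where
  "e5 m n v = (m * (norm v)\<^sup>2 - 3) / sqrt (6 * n) * sqrt (Mw m n v)"

definition vinner :: "(real^3 \<Rightarrow> real) \<Rightarrow> (real^3 \<Rightarrow> real) \<Rightarrow> real" where
  "vinner f g = (LINT v|lborel. f v * g v)"

definition Pk :: "real \<Rightarrow> real \<Rightarrow> (real^3 \<Rightarrow> real) \<Rightarrow> real^3 \<Rightarrow> real" where
  "Pk m n f v = vinner f (e1 m n) * e1 m n v
     + (\<Sum>j\<in>UNIV. vinner f (emom m n j) * emom m n j v)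
     + vinner f (e5 m n) * e5 m n v"

definition L11 :: "real \<Rightarrow> real \<Rightarrow> (real^3 \<Rightarrow> real) \<Rightarrow> real^3 \<Rightarrow> real" where
  "L11 m1 n10 f1 v = n10 * (Pk m1 n10 f1 v - f1 v)"

definition L22 :: "real \<Rightarrow> real \<Rightarrow> (real^3 \<Rightarrow> real) \<Rightarrow> real^3 \<Rightarrow> real" where
  "L22 m2 n20 f2 v = n20 * (Pk m2 n20 f2 v - f2 v)"

definition L12 :: "real \<Rightarrow> real \<Rightarrow> real \<Rightarrow> real \<Rightarrow> real \<Rightarrow> real \<Rightarrow>
    (real^3 \<Rightarrow> real) \<Rightarrow> (real^3 \<Rightarrow> real) \<Rightarrow> real^3 \<Rightarrow> real" where
  "L12 m1 m2 n10 n20 \<delta> \<omega> f1 f2 v =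
     n20 * (Pk m1 n10 f1 v - f1 v)
   + n20 * ((1 - \<delta>) * (\<Sum>j\<in>UNIV.
        (sqrt (n10 / n20) * sqrt (m1 / m2) * vinner f2 (emom m2 n20 j)
          - vinner f1 (emom m1 n10 j)) * emom m1 n10 j v)
     + (1 - \<omega>) * (sqrt (n10 / n20) * vinner f2 (e5 m2 n20) - vinner f1 (e5 m1 n10))
         * e5 m1 n10 v)"

definition L21 :: "real \<Rightarrow> real \<Rightarrow> real \<Rightarrow> real \<Rightarrow> real \<Rightarrow> real \<Rightarrow>
    (real^3 \<Rightarrow> real) \<Rightarrow> (real^3 \<Rightarrow> real) \<Rightarrow> real^3 \<Rightarrow> real" where
  "L21 m1 m2 n10 n20 \<delta> \<omega> f1 f2 v =
     n10 * (Pk m2 n20 f2 v - f2 v)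
   + n10 * (m1 / m2 * (1 - \<delta>) * (\<Sum>j\<in>UNIV.
        (sqrt (n20 / n10) * sqrt (m2 / m1) * vinner f1 (emom m1 n10 j)
          - vinner f2 (emom m2 n20 j)) * emom m2 n20 j v)
     + (1 - \<omega>) * (sqrt (n20 / n10) * vinner f1 (e5 m1 n10) - vinner f2 (e5 m2 n20))
         * e5 m2 n20 v)"

definition Lop :: "real \<Rightarrow> real \<Rightarrow> real \<Rightarrow> real \<Rightarrow> real \<Rightarrow> real \<Rightarrow>
    (real^3 \<Rightarrow> real) \<Rightarrow> (real^3 \<Rightarrow> real) \<Rightarrow> (real^3 \<Rightarrow> real) \<times> (real^3 \<Rightarrow> real)" where
  "Lop m1 m2 n10 n20 \<delta> \<omega> f1 f2 =
     ((\<lambda>v. L11 m1 n10 f1 v + L12 m1 m2 n10 n20 \<delta> \<omega> f1 f2 v),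
      (\<lambda>v. L22 m2 n20 f2 v + L21 m1 m2 n10 n20 \<delta> \<omega> f1 f2 v))"

definition Bvec :: "real \<Rightarrow> real \<Rightarrow> real \<Rightarrow> real \<Rightarrow> nat \<Rightarrow>
    (real^3 \<Rightarrow> real) \<times> (real^3 \<Rightarrow> real)" where
  "Bvec m1 m2 n10 n20 i =
    (if i = 0 then (\<lambda>v. sqrt (Mw m1 n10 v), \<lambda>v. 0)
     else if i = 1 then (\<lambda>v. 0, \<lambda>v. sqrt (Mw m2 n20 v))
     else if i = 2 then (\<lambda>v. m1 * v $ 1 * sqrt (Mw m1 n10 v), \<lambda>v. m2 * v $ 1 * sqrt (Mw m2 n20 v))
     else if i = 3 then (\<lambda>v. m1 * v $ 2 * sqrt (Mw m1 n10 v), \<lambda>v. m2 * v $ 2 * sqrt (Mw m2 n20 v))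
     else if i = 4 then (\<lambda>v. m1 * v $ 3 * sqrt (Mw m1 n10 v), \<lambda>v. m2 * v $ 3 * sqrt (Mw m2 n20 v))
     else (\<lambda>v. (m1 * (norm v)\<^sup>2 - 3) * sqrt (Mw m1 n10 v),
           \<lambda>v. (m2 * (norm v)\<^sup>2 - 3) * sqrt (Mw m2 n20 v)))"

definition vinner2 :: "(real^3 \<Rightarrow> real) \<times> (real^3 \<Rightarrow> real) \<Rightarrow>
    (real^3 \<Rightarrow> real) \<times> (real^3 \<Rightarrow> real) \<Rightarrow> real" where
  "vinner2 f g = vinner (fst f) (fst g) + vinner (snd f) (snd g)"

definition Pbig :: "real \<Rightarrow> real \<Rightarrow> real \<Rightarrow> real \<Rightarrow>
    (real^3 \<Rightarrow> real) \<times> (real^3 \<Rightarrow> real) \<Rightarrow> (real^3 \<Rightarrow> real) \<times> (real^3 \<Rightarrow> real)" where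
  "Pbig m1 m2 n10 n20 f = (THE g.
     (\<exists>c :: nat \<Rightarrow> real. g = ((\<lambda>v. \<Sum>i<6. c i * fst (Bvec m1 m2 n10 n20 i) v),
                               (\<lambda>v. \<Sum>i<6. c i * snd (Bvec m1 m2 n10 n20 i) v)))
     \<and> (\<forall>i<6. vinner2 ((\<lambda>v. fst f v - fst g v), (\<lambda>v. snd f v - snd g v))
                        (Bvec m1 m2 n10 n20 i) = 0))"

definition L2_tv :: "((real^3) \<times> (real^3) \<Rightarrow> real) \<Rightarrow> bool" where
  "L2_tv f \<longleftrightarrow> set_borel_measurable lborel torus_dom f
      \<and> set_integrable lborel torus_dom (\<lambda>z. (f z)\<^sup>2)"

end

(*
  For fixed x everything is an inequality in L^2(R^3_v)^2. Write a_i, b_i for the coordinates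
  of f_1, f_2 in the orthonormal families e_{1i}, e_{2i}. The self-interaction parts of L
  contribute -(n10 + n20) |(I - P1, I - P2) f|^2; the cross terms split into one exchange term
  per momentum coordinate and one for the energy, of the form -kappa (q a_i - p b_i)^2 / m2 with
  kappa = 1 - delta and (p, q) = (sqrt (m1 n10), sqrt (m2 n20)), resp. kappa = 1 - omega,
  (p, q) = (sqrt n10, sqrt n20) and both masses replaced by 1.
  The six vectors spanning the range of P are mutually orthogonal, so |(I - P) f|^2 exceeds
  |(I - P1, I - P2) f|^2 by the squared distances (q a_i - p b_i)^2 / (p^2 + q^2) of the points
  (a_i, b_i) to the lines R (p, q). Since m2 <= m1 gives p^2 + q^2 >= (n10 + n20) m2,
  every exchange term is at most -(n10 + n20) min (1 - delta) (1 - omega) times its distance.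
  The pointwise inequality is then integrated over x by Fubini.
*)

theory Submission
  imports Defs "HOL-Probability.Probability"
begin

section \<open>Gaussian moments\<close>

lemma has_bochner_integral_lborel_prod_coordinates:
  fixes G :: "'n::finite \<Rightarrow> real \<Rightarrow> real"
  assumes "\<And>i. integrable lborel (G i)"
  shows "has_bochner_integral lborel (\<lambda>v::real^'n. \<Prod>i\<in>UNIV. G i (v $ i))
           (\<Prod>i\<in>UNIV. integral\<^sup>L lborel (G i))"
proof -
  interpret P: product_sigma_finite "\<lambda>_::real^'n. lborel::real measure"
    by (simp add: product_sigma_finite_def sigma_finite_lborel)
  define F where "F b = G (axis_index b)" for b :: "real^'n"
  define \<phi> where "\<phi> = (\<lambda>f. \<Sum>b\<in>Basis. f b *\<^sub>R b :: real^'n)"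
  have \<phi>_inner: "\<phi> f \<bullet> b = f b" if "b \<in> Basis" for f b
    using that unfolding \<phi>_def
    by (simp add: inner_sum_left inner_Basis if_distrib cong: if_cong)
  have prod_Basis: "prod h (Basis :: (real^'n) set) = (\<Prod>i\<in>UNIV. h (axis i 1))" for h :: "real^'n \<Rightarrow> real"
  proof -
    have Basis_eq: "(Basis :: (real^'n) set) = range (\<lambda>i. axis i (1::real))"
      by (auto simp: Basis_vec_def)
    show ?thesis
      unfolding Basis_eq by (subst prod.reindex) (auto simp: inj_on_def axis_eq_axis)
  qed
  have integrand: "(\<Prod>i\<in>UNIV. G i (v $ i)) = (\<Prod>b\<in>Basis. F b (v \<bullet> b))" for v :: "real^'n"
    by (simp add: prod_Basis F_def inner_axis)
  have integrals: "(\<Prod>i\<in>UNIV. integral\<^sup>L lborel (G i)) = (\<Prod>b\<in>Basis. integral\<^sup>L lborel (F b))"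
    by (simp add: prod_Basis F_def)
  have F_int: "b \<in> Basis \<Longrightarrow> integrable lborel (F b)" for b
    using assms by (simp add: F_def)
  have \<phi>_meas: "\<phi> \<in> measurable (\<Pi>\<^sub>M b\<in>Basis. lborel) borel"
    unfolding \<phi>_def by measurable
  have F_meas: "(\<lambda>v::real^'n. \<Prod>b\<in>Basis. F b (v \<bullet> b)) \<in> borel_measurable borel"
  proof (intro borel_measurable_prod)
    fix b :: "real^'n" assume "b \<in> Basis"
    then have "F b \<in> borel_measurable borel"
      using borel_measurable_integrable[OF F_int] by simp
    then show "(\<lambda>v::real^'n. F b (v \<bullet> b)) \<in> borel_measurable borel"
      by (rule measurable_compose[rotated]) measurable
  qed
  have prod_\<phi>: "(\<lambda>f. \<Prod>b\<in>Basis. F b (\<phi> f \<bullet> b)) = (\<lambda>f. \<Prod>b\<in>Basis. F b (f b))"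
    by (intro ext prod.cong) (auto simp: \<phi>_inner)
  have lborel_distr: "(lborel :: (real^'n) measure) = distr (\<Pi>\<^sub>M b\<in>Basis. lborel) borel \<phi>"
    unfolding \<phi>_def by (rule lborel_eq)
  have "has_bochner_integral (\<Pi>\<^sub>M b\<in>Basis. lborel) (\<lambda>f. \<Prod>b\<in>Basis. F b (f b))
          (\<Prod>b\<in>Basis. integral\<^sup>L lborel (F b))"
    using P.product_integrable_prod[OF _ F_int] P.product_integral_prod[OF _ F_int]
    by (simp add: has_bochner_integral_iff)
  then show ?thesis
    unfolding integrand integrals lborel_distr
    by (simp add: has_bochner_integral_iff integrable_distr_eq[OF \<phi>_meas F_meas]
        integral_distr[OF \<phi>_meas F_meas] prod_\<phi>)
qed

definition gaussian :: "real \<Rightarrow> real \<Rightarrow> real" where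
  "gaussian m t = normal_density 0 (1 / sqrt m) t"

definition gaussian_moment :: "real \<Rightarrow> nat \<Rightarrow> real" where
  "gaussian_moment m k = (LINT t|lborel. gaussian m t * t ^ k)"

lemma integrable_gaussian_moment: "m > 0 \<Longrightarrow> integrable lborel (\<lambda>t. gaussian m t * t ^ k)"
  unfolding gaussian_def using integrable_normal_moment[of "1 / sqrt m" 0 k] by simp

lemma gaussian_moment_values:
  assumes "m > 0"
  shows "gaussian_moment m 0 = 1" "gaussian_moment m 1 = 0" "gaussian_moment m 2 = 1 / m"
    "gaussian_moment m 3 = 0" "gaussian_moment m 4 = 3 / m\<^sup>2"
proof -
  have sd: "0 < 1 / sqrt m" using assms by simp
  have even: "gaussian_moment m (2 * k) = fact (2 * k) / ((2 / (1 / sqrt m)\<^sup>2) ^ k * fact k)" for k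
    unfolding gaussian_moment_def gaussian_def using integral_normal_moment_even[OF sd, of 0 k] by simp
  have odd: "gaussian_moment m (2 * k + 1) = 0" for k
    unfolding gaussian_moment_def gaussian_def using integral_normal_moment_odd[OF sd, of 0 k] by simp
  show "gaussian_moment m 0 = 1" using even[of 0] by simp
  show "gaussian_moment m 1 = 0" using odd[of 0] by simp
  show "gaussian_moment m 3 = 0" using odd[of 1] by simp
  show "gaussian_moment m 2 = 1 / m" using even[of 1] assms by (simp add: fact_numeral power_divide)
  show "gaussian_moment m 4 = 3 / m\<^sup>2" using even[of 2] assms by (simp add: fact_numeral power_divide)
qed

lemma norm_sq_vec3: "(norm (v::real^3))\<^sup>2 = (v $ 1)\<^sup>2 + (v $ 2)\<^sup>2 + (v $ 3)\<^sup>2"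
  by (simp only: power2_norm_eq_inner) (simp add: inner_vec_def sum_3 power2_eq_square)

lemma Mw_eq_prod_gaussian:
  assumes "m > 0"
  shows "Mw m n v = n * (gaussian m (v $ 1) * gaussian m (v $ 2) * gaussian m (v $ 3))"
proof -
  have powr: "(m / (2 * pi)) powr (3/2) = sqrt (m / (2 * pi)) ^ 3"
    using assms by (simp add: powr_half_sqrt[symmetric] powr_realpow[symmetric] powr_powr)
  have gaussian: "gaussian m t = sqrt (m / (2 * pi)) * exp (- m * t\<^sup>2 / 2)" for t
  proof -
    have "(1 / sqrt m)\<^sup>2 = 1 / m" using assms by (simp add: power_divide)
    then have "gaussian m t = 1 / sqrt (2 * pi * (1 / m)) * exp (- (t\<^sup>2) / (2 * (1 / m)))"
      unfolding gaussian_def normal_density_def by simp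
    also have "1 / sqrt (2 * pi * (1 / m)) = sqrt (m / (2 * pi))"
      by (simp add: real_sqrt_divide real_sqrt_mult)
    also have "- (t\<^sup>2) / (2 * (1 / m)) = - m * t\<^sup>2 / 2"
      using assms by simp
    finally show ?thesis .
  qed
  have exp_sum: "exp (- m * x / 2) * exp (- m * y / 2) * exp (- m * z / 2) = exp (- m * (x + y + z) / 2)"
    for x y z
    unfolding exp_add[symmetric] by (rule arg_cong[where f=exp]) (simp add: field_simps)
  show ?thesis
    unfolding Mw_def norm_sq_vec3 powr gaussian exp_sum[symmetric]
    by (simp only: power3_eq_cube mult_ac)
qed

lemma has_bochner_integral_Mw_monomial:
  assumes "m > 0"
  shows "has_bochner_integral lborel (\<lambda>v::real^3. Mw m n v * ((v $ 1) ^ a * (v $ 2) ^ b * (v $ 3) ^ c))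
           (n * (gaussian_moment m a * gaussian_moment m b * gaussian_moment m c))"
proof -
  define k where "k i = (if i = 1 then a else if i = 2 then b else c)" for i :: 3
  have k: "k 1 = a" "k 2 = b" "k 3 = c" by (simp_all add: k_def)
  have prod_3: "prod f (UNIV :: 3 set) = f 1 * f 2 * f 3" for f :: "3 \<Rightarrow> real"
    unfolding UNIV_3 by (simp add: ac_simps)
  have "has_bochner_integral lborel (\<lambda>v::real^3. \<Prod>i\<in>UNIV. gaussian m (v $ i) * (v $ i) ^ k i)
      (\<Prod>i\<in>UNIV. gaussian_moment m (k i))"
    unfolding gaussian_moment_def
    by (rule has_bochner_integral_lborel_prod_coordinates) (rule integrable_gaussian_moment[OF assms])
  from has_bochner_integral_mult_right[OF this, of n] show ?thesis
    by (simp only: prod_3 k Mw_eq_prod_gaussian[OF assms] mult_ac)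
qed

(* A polynomial in v: the monomial (c, a, b, d) stands for c * v1^a * v2^b * v3^d. *)
type_synonym poly3 = "(real \<times> nat \<times> nat \<times> nat) list"

definition poly3_eval :: "poly3 \<Rightarrow> real^3 \<Rightarrow> real" where
  "poly3_eval ps v = (\<Sum>(c, a, b, d)\<leftarrow>ps. c * ((v $ 1) ^ a * (v $ 2) ^ b * (v $ 3) ^ d))"

definition poly3_mult :: "poly3 \<Rightarrow> poly3 \<Rightarrow> poly3" where
  "poly3_mult ps qs =
     concat (map (\<lambda>(c, a, b, d). map (\<lambda>(c', a', b', d'). (c * c', a + a', b + b', d + d')) qs) ps)"

definition poly3_gaussian_integral :: "real \<Rightarrow> poly3 \<Rightarrow> real" where
  "poly3_gaussian_integral m ps =
     (\<Sum>(c, a, b, d)\<leftarrow>ps. c * (gaussian_moment m a * gaussian_moment m b * gaussian_moment m d))"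

lemma poly3_eval_mult: "poly3_eval (poly3_mult ps qs) v = poly3_eval ps v * poly3_eval qs v"
proof (induction ps)
  case Nil
  then show ?case by (simp add: poly3_eval_def poly3_mult_def)
next
  case (Cons p ps)
  obtain c a b d where p: "p = (c, a, b, d)" by (cases p) auto
  have "poly3_eval (map (\<lambda>(c', a', b', d'). (c * c', a + a', b + b', d + d')) qs) v
        = c * ((v $ 1) ^ a * (v $ 2) ^ b * (v $ 3) ^ d) * poly3_eval qs v"
    by (induction qs) (auto simp: poly3_eval_def power_add algebra_simps)
  with Cons show ?case
    unfolding p by (simp add: poly3_eval_def poly3_mult_def algebra_simps)
qed

lemma has_bochner_integral_Mw_poly3:
  assumes "m > 0"
  shows "has_bochner_integral lborel (\<lambda>v. Mw m n v * poly3_eval ps v) (n * poly3_gaussian_integral m ps)"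
proof (induction ps)
  case Nil
  then show ?case by (simp add: poly3_eval_def poly3_gaussian_integral_def has_bochner_integral_zero)
next
  case (Cons p ps)
  obtain c a b d where p: "p = (c, a, b, d)" by (cases p) auto
  have "has_bochner_integral lborel
      (\<lambda>v. c * (Mw m n v * ((v $ 1) ^ a * (v $ 2) ^ b * (v $ 3) ^ d)))
      (c * (n * (gaussian_moment m a * gaussian_moment m b * gaussian_moment m d)))"
    by (rule has_bochner_integral_mult_right[OF has_bochner_integral_Mw_monomial[OF assms]])
  from has_bochner_integral_add[OF this Cons] show ?case
    unfolding p by (simp add: poly3_eval_def poly3_gaussian_integral_def algebra_simps)
qed

section \<open>Orthogonal expansions in L^2\<close>

definition square_integrable :: "'a measure \<Rightarrow> ('a \<Rightarrow> real) \<Rightarrow> bool" where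
  "square_integrable M f \<longleftrightarrow> f \<in> borel_measurable M \<and> integrable M (\<lambda>x. (f x)\<^sup>2)"

lemma integrable_mult_square_integrable:
  assumes "square_integrable M f" "square_integrable M g"
  shows "integrable M (\<lambda>x. f x * g x)"
proof (rule Bochner_Integration.integrable_bound)
  show "integrable M (\<lambda>x. (f x)\<^sup>2 + (g x)\<^sup>2)"
    using assms unfolding square_integrable_def by auto
  show "(\<lambda>x. f x * g x) \<in> borel_measurable M"
    using assms unfolding square_integrable_def by auto
  have "\<bar>a * b\<bar> \<le> a\<^sup>2 + b\<^sup>2" for a b :: real
  proof -
    have "0 \<le> (a - b)\<^sup>2" "0 \<le> (a + b)\<^sup>2" "0 \<le> a\<^sup>2 + b\<^sup>2" by simp_all
    then show ?thesis by (simp add: abs_le_iff power2_eq_square algebra_simps)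
  qed
  then show "AE x in M. norm (f x * g x) \<le> norm ((f x)\<^sup>2 + (g x)\<^sup>2)"
    by auto
qed

lemma square_integrable_add:
  assumes "square_integrable M f" "square_integrable M g"
  shows "square_integrable M (\<lambda>x. f x + g x)"
proof -
  have "(\<lambda>x. (f x + g x)\<^sup>2) = (\<lambda>x. (f x)\<^sup>2 + (g x)\<^sup>2 + 2 * (f x * g x))"
    by (simp add: power2_sum mult.assoc)
  then show ?thesis
    using assms integrable_mult_square_integrable[OF assms]
    unfolding square_integrable_def by auto
qed

lemma square_integrable_cmult:
  "square_integrable M f \<Longrightarrow> square_integrable M (\<lambda>x. c * f x)"
  unfolding square_integrable_def by (auto simp: power_mult_distrib intro: borel_measurable_times)

lemma square_integrable_diff:
  "square_integrable M f \<Longrightarrow> square_integrable M g \<Longrightarrow> square_integrable M (\<lambda>x. f x - g x)"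
  using square_integrable_add[of M f "\<lambda>x. -1 * g x"] square_integrable_cmult[of M g "-1"] by simp

lemma square_integrable_sum:
  "(\<And>i. i \<in> I \<Longrightarrow> square_integrable M (f i)) \<Longrightarrow> square_integrable M (\<lambda>x. \<Sum>i\<in>I. f i x)"
proof (induction I rule: infinite_finite_induct)
  case (insert i I)
  then show ?case by (simp add: square_integrable_add)
qed (simp_all add: square_integrable_def)

lemma square_integrable_abs: "square_integrable M f \<Longrightarrow> square_integrable M (\<lambda>x. \<bar>f x\<bar>)"
  unfolding square_integrable_def by auto

lemma vinner_commute: "vinner f g = vinner g f"
  unfolding vinner_def by (simp add: mult.commute)

lemma vinner_self: "vinner f f = (LINT v|lborel. (f v)\<^sup>2)"
  unfolding vinner_def by (simp add: power2_eq_square)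

lemma vinner_scale_left: "vinner (\<lambda>v. c * f v) g = c * vinner f g"
  unfolding vinner_def by (simp add: mult.assoc)

lemma vinner_scale_right: "vinner f (\<lambda>v. c * g v) = c * vinner f g"
  unfolding vinner_def by (simp add: mult.left_commute)

lemma vinner_sum_right:
  assumes "square_integrable lborel f" "\<And>i. i \<in> I \<Longrightarrow> square_integrable lborel (g i)"
  shows "vinner f (\<lambda>v. \<Sum>i\<in>I. c i * g i v) = (\<Sum>i\<in>I. c i * vinner f (g i))"
  unfolding vinner_def sum_distrib_left
  by (subst Bochner_Integration.integral_sum)
     (auto simp: algebra_simps intro!: integrable_mult_square_integrable assms)

lemma vinner_diff_left:
  assumes "square_integrable lborel f" "square_integrable lborel g" "square_integrable lborel h"
  shows "vinner (\<lambda>v. f v - g v) h = vinner f h - vinner g h"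
  unfolding vinner_def left_diff_distrib
  using assms by (simp add: integrable_mult_square_integrable)

lemma integral_sum_squares:
  "square_integrable lborel g1 \<Longrightarrow> square_integrable lborel g2 \<Longrightarrow>
    (LINT v|lborel. (g1 v)\<^sup>2 + (g2 v)\<^sup>2) = vinner g1 g1 + vinner g2 g2"
  unfolding square_integrable_def by (simp add: vinner_self)

lemma vinner_unit_sq_le:
  assumes f: "square_integrable lborel f" and e: "square_integrable lborel e" "vinner e e = 1"
  shows "(vinner f e)\<^sup>2 \<le> vinner f f"
proof -
  define c where "c = vinner f e"
  have fe: "integrable lborel (\<lambda>v. f v * e v)"
    by (rule integrable_mult_square_integrable[OF f e(1)])
  have sq: "integrable lborel (\<lambda>v. (f v)\<^sup>2)" "integrable lborel (\<lambda>v. (e v)\<^sup>2)"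
    using f e unfolding square_integrable_def by auto
  have "0 \<le> (LINT v|lborel. (f v - c * e v)\<^sup>2)" by simp
  also have "\<dots> = (LINT v|lborel. (f v)\<^sup>2 - 2 * c * (f v * e v) + c\<^sup>2 * (e v)\<^sup>2)"
    by (simp add: power2_eq_square algebra_simps)
  also have "\<dots> = vinner f f - 2 * c * vinner f e + c\<^sup>2 * vinner e e"
    using fe sq by (simp add: vinner_self vinner_def)
  finally show ?thesis
    using e(2) by (simp add: c_def power2_eq_square)
qed

definition orthonormal_on :: "'i set \<Rightarrow> ('i \<Rightarrow> real^3 \<Rightarrow> real) \<Rightarrow> bool" where
  "orthonormal_on I e \<longleftrightarrow> (\<forall>i\<in>I. square_integrable lborel (e i))
     \<and> (\<forall>i\<in>I. \<forall>j\<in>I. vinner (e i) (e j) = (if i = j then 1 else 0))"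

lemma vinner_expansion:
  assumes "orthonormal_on I e" "finite I" "j \<in> I"
  shows "vinner (\<lambda>v. \<Sum>i\<in>I. c i * e i v) (e j) = c j"
proof -
  have "vinner (\<lambda>v. \<Sum>i\<in>I. c i * e i v) (e j) = (\<Sum>i\<in>I. c i * vinner (e j) (e i))"
    using assms by (subst vinner_commute) (simp add: vinner_sum_right orthonormal_on_def)
  also have "\<dots> = (\<Sum>i\<in>I. if i = j then c i else 0)"
    using assms unfolding orthonormal_on_def by (intro sum.cong) auto
  finally show ?thesis
    using assms(2,3) by simp
qed

lemma vinner_residual_expansion:
  assumes e: "orthonormal_on I e" "finite I" and f: "square_integrable lborel f"
  defines "r \<equiv> (\<lambda>v. f v - (\<Sum>i\<in>I. vinner f (e i) * e i v))"
  shows "vinner r r = vinner f f - (\<Sum>i\<in>I. (vinner f (e i))\<^sup>2)"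
proof -
  define p where "p = (\<lambda>v. \<Sum>i\<in>I. vinner f (e i) * e i v)"
  have e_sq: "\<And>i. i \<in> I \<Longrightarrow> square_integrable lborel (e i)"
    using e(1) by (simp add: orthonormal_on_def)
  have p: "square_integrable lborel p"
    unfolding p_def by (intro square_integrable_sum square_integrable_cmult e_sq)
  have r_eq: "r = (\<lambda>v. f v - p v)"
    unfolding r_def p_def ..
  have r: "square_integrable lborel r"
    unfolding r_eq by (rule square_integrable_diff[OF f p])
  have fp: "vinner f p = (\<Sum>i\<in>I. (vinner f (e i))\<^sup>2)"
    unfolding p_def using f e_sq by (simp add: vinner_sum_right power2_eq_square)
  have pp: "vinner p p = (\<Sum>i\<in>I. (vinner f (e i))\<^sup>2)"
  proof -
    have "vinner p p = (\<Sum>i\<in>I. vinner f (e i) * vinner p (e i))"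
      by (subst (2) p_def) (rule vinner_sum_right[OF p e_sq])
    also have "\<dots> = (\<Sum>i\<in>I. (vinner f (e i))\<^sup>2)"
      unfolding p_def by (simp add: vinner_expansion[OF e] power2_eq_square)
    finally show ?thesis .
  qed
  have "vinner r r = vinner f r - vinner p r"
    unfolding r_eq using f p r[unfolded r_eq] by (rule vinner_diff_left)
  also have "vinner f r = vinner f f - vinner p f"
    unfolding vinner_commute[of f r] unfolding r_eq using f p f by (rule vinner_diff_left)
  also have "vinner p r = vinner f p - vinner p p"
    unfolding vinner_commute[of p r] unfolding r_eq using f p p by (rule vinner_diff_left)
  finally show ?thesis
    using fp pp by (simp add: vinner_commute[of p f])
qed

type_synonym vfun2 = "(real^3 \<Rightarrow> real) \<times> (real^3 \<Rightarrow> real)"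

definition square_integrable2 :: "vfun2 \<Rightarrow> bool" where
  "square_integrable2 f \<longleftrightarrow> square_integrable lborel (fst f) \<and> square_integrable lborel (snd f)"

(* lincomb2 and diff2 are spelled out exactly as in Pbig_def. *)
definition lincomb2 :: "nat \<Rightarrow> (nat \<Rightarrow> real) \<Rightarrow> (nat \<Rightarrow> vfun2) \<Rightarrow> vfun2" where
  "lincomb2 K c B = ((\<lambda>v. \<Sum>k<K. c k * fst (B k) v), (\<lambda>v. \<Sum>k<K. c k * snd (B k) v))"

definition diff2 :: "vfun2 \<Rightarrow> vfun2 \<Rightarrow> vfun2" where
  "diff2 f g = ((\<lambda>v. fst f v - fst g v), (\<lambda>v. snd f v - snd g v))"

definition orthogonal_family2 :: "nat \<Rightarrow> (nat \<Rightarrow> vfun2) \<Rightarrow> bool" where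
  "orthogonal_family2 K B \<longleftrightarrow> (\<forall>k<K. square_integrable2 (B k) \<and> vinner2 (B k) (B k) \<noteq> 0)
     \<and> (\<forall>k<K. \<forall>l<K. k \<noteq> l \<longrightarrow> vinner2 (B k) (B l) = 0)"

definition fourier2 :: "nat \<Rightarrow> (nat \<Rightarrow> vfun2) \<Rightarrow> vfun2 \<Rightarrow> vfun2" where
  "fourier2 K B f = lincomb2 K (\<lambda>k. vinner2 f (B k) / vinner2 (B k) (B k)) B"

lemma vinner2_commute: "vinner2 f g = vinner2 g f"
  unfolding vinner2_def by (simp add: vinner_commute)

lemma square_integrable2_lincomb2:
  "(\<And>k. k < K \<Longrightarrow> square_integrable2 (B k)) \<Longrightarrow> square_integrable2 (lincomb2 K c B)"
  unfolding square_integrable2_def lincomb2_def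
  by (auto intro!: square_integrable_sum square_integrable_cmult)

lemma square_integrable2_diff2:
  "square_integrable2 f \<Longrightarrow> square_integrable2 g \<Longrightarrow> square_integrable2 (diff2 f g)"
  unfolding square_integrable2_def diff2_def by (simp add: square_integrable_diff)

lemma vinner2_lincomb2_right:
  assumes "square_integrable2 f" "\<And>k. k < K \<Longrightarrow> square_integrable2 (B k)"
  shows "vinner2 f (lincomb2 K c B) = (\<Sum>k<K. c k * vinner2 f (B k))"
proof -
  have "vinner (fst f) (\<lambda>v. \<Sum>k<K. c k * fst (B k) v) = (\<Sum>k<K. c k * vinner (fst f) (fst (B k)))"
    "vinner (snd f) (\<lambda>v. \<Sum>k<K. c k * snd (B k) v) = (\<Sum>k<K. c k * vinner (snd f) (snd (B k)))"
    using assms unfolding square_integrable2_def by (auto intro!: vinner_sum_right)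
  then show ?thesis
    unfolding vinner2_def lincomb2_def by (simp add: sum.distrib algebra_simps)
qed

lemma vinner2_diff2_left:
  "square_integrable2 f \<Longrightarrow> square_integrable2 g \<Longrightarrow> square_integrable2 h \<Longrightarrow>
    vinner2 (diff2 f g) h = vinner2 f h - vinner2 g h"
  unfolding vinner2_def diff2_def square_integrable2_def by (simp add: vinner_diff_left)

lemma vinner2_lincomb2_orthogonal:
  assumes "orthogonal_family2 K B" "l < K"
  shows "vinner2 (lincomb2 K c B) (B l) = c l * vinner2 (B l) (B l)"
proof -
  have "vinner2 (lincomb2 K c B) (B l) = (\<Sum>k<K. c k * vinner2 (B l) (B k))"
    using assms by (subst vinner2_commute) (simp add: vinner2_lincomb2_right orthogonal_family2_def)
  also have "\<dots> = (\<Sum>k<K. if k = l then c l * vinner2 (B l) (B l) else 0)"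
    using assms unfolding orthogonal_family2_def by (intro sum.cong) auto
  finally show ?thesis
    using assms(2) by simp
qed

lemma vinner2_residual_lincomb2:
  assumes "orthogonal_family2 K B" "square_integrable2 f" "k < K"
  shows "vinner2 (diff2 f (lincomb2 K c B)) (B k) = vinner2 f (B k) - c k * vinner2 (B k) (B k)"
  using assms
  by (simp add: vinner2_diff2_left square_integrable2_lincomb2 vinner2_lincomb2_orthogonal
      orthogonal_family2_def)

lemma the_orthogonal_projection:
  assumes B: "orthogonal_family2 K B" and f: "square_integrable2 f"
  shows "(THE g. (\<exists>c. g = lincomb2 K c B) \<and> (\<forall>k<K. vinner2 (diff2 f g) (B k) = 0))
    = fourier2 K B f"
proof (rule the_equality)
  have "vinner2 (B k) (B k) \<noteq> 0" if "k < K" for k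
    using B that by (simp add: orthogonal_family2_def)
  then show "(\<exists>c. fourier2 K B f = lincomb2 K c B) \<and> (\<forall>k<K. vinner2 (diff2 f (fourier2 K B f)) (B k) = 0)"
    using B f by (auto simp: fourier2_def vinner2_residual_lincomb2)
next
  fix g assume g: "(\<exists>c. g = lincomb2 K c B) \<and> (\<forall>k<K. vinner2 (diff2 f g) (B k) = 0)"
  then obtain c where c: "g = lincomb2 K c B" by blast
  have "c k = vinner2 f (B k) / vinner2 (B k) (B k)" if "k < K" for k
  proof -
    have "vinner2 f (B k) - c k * vinner2 (B k) (B k) = 0" "vinner2 (B k) (B k) \<noteq> 0"
      using g that B f by (simp_all add: c vinner2_residual_lincomb2 orthogonal_family2_def)
    then show ?thesis by (simp add: eq_divide_eq)
  qed
  then show "g = fourier2 K B f"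
    unfolding c fourier2_def lincomb2_def by (auto intro!: sum.cong)
qed

lemma vinner2_residual_fourier2:
  assumes B: "orthogonal_family2 K B" and f: "square_integrable2 f"
  defines "r \<equiv> diff2 f (fourier2 K B f)"
  shows "vinner2 r r = vinner2 f f - (\<Sum>k<K. (vinner2 f (B k))\<^sup>2 / vinner2 (B k) (B k))"
proof -
  have B_sq: "\<And>k. k < K \<Longrightarrow> square_integrable2 (B k)"
    using B by (simp add: orthogonal_family2_def)
  have p: "square_integrable2 (fourier2 K B f)"
    unfolding fourier2_def by (rule square_integrable2_lincomb2[OF B_sq])
  have r: "square_integrable2 r"
    unfolding r_def by (rule square_integrable2_diff2[OF f p])
  have rB: "vinner2 r (B k) = 0" if "k < K" for k
    using B f that unfolding r_def fourier2_def
    by (simp add: vinner2_residual_lincomb2 orthogonal_family2_def)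
  have "vinner2 r r = vinner2 f r - vinner2 (fourier2 K B f) r"
    unfolding r_def by (rule vinner2_diff2_left[OF f p r[unfolded r_def]])
  also have "vinner2 (fourier2 K B f) r = vinner2 r (fourier2 K B f)"
    by (rule vinner2_commute)
  also have "\<dots> = 0"
    using r B_sq rB by (simp add: fourier2_def vinner2_lincomb2_right)
  also have "vinner2 f r = vinner2 r f"
    by (rule vinner2_commute)
  also have "\<dots> = vinner2 f f - vinner2 (fourier2 K B f) f"
    unfolding r_def by (rule vinner2_diff2_left[OF f p f])
  also have "vinner2 (fourier2 K B f) f = vinner2 f (fourier2 K B f)"
    by (rule vinner2_commute)
  also have "vinner2 f (fourier2 K B f) = (\<Sum>k<K. (vinner2 f (B k))\<^sup>2 / vinner2 (B k) (B k))"
    using f B_sq by (simp add: fourier2_def vinner2_lincomb2_right power2_eq_square)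
  finally show ?thesis by simp
qed

section \<open>Exchange terms\<close>

(* The contribution of one momentum coordinate to the cross terms of <L f, f>; the energy
   coordinate is the case m1 = m2 = 1. *)
definition exchange :: "real \<Rightarrow> real \<Rightarrow> real \<Rightarrow> real \<Rightarrow> real \<Rightarrow> real \<Rightarrow> real \<Rightarrow> real" where
  "exchange m1 m2 n10 n20 \<kappa> a b =
     n20 * (\<kappa> * (sqrt (n10 / n20) * sqrt (m1 / m2) * b - a)) * a
   + n10 * (m1 / m2 * \<kappa> * (sqrt (n20 / n10) * sqrt (m2 / m1) * a - b)) * b"

definition line_dist2 :: "real \<Rightarrow> real \<Rightarrow> real \<Rightarrow> real \<Rightarrow> real" where
  "line_dist2 p q a b = a\<^sup>2 + b\<^sup>2 - (p * a + q * b)\<^sup>2 / (p\<^sup>2 + q\<^sup>2)"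

lemma line_dist2_eq:
  assumes "p\<^sup>2 + q\<^sup>2 \<noteq> 0"
  shows "line_dist2 p q a b = (q * a - p * b)\<^sup>2 / (p\<^sup>2 + q\<^sup>2)"
  using assms unfolding line_dist2_def by (simp add: field_simps power2_eq_square)

lemma line_dist2_scale:
  assumes "c \<noteq> 0"
  shows "line_dist2 (c * p) (c * q) a b = line_dist2 p q a b"
proof -
  have "c * p * a + c * q * b = c * (p * a + q * b)" "(c * p)\<^sup>2 + (c * q)\<^sup>2 = c\<^sup>2 * (p\<^sup>2 + q\<^sup>2)"
    by (simp_all add: algebra_simps power_mult_distrib)
  then show ?thesis
    unfolding line_dist2_def using assms by (simp add: power_mult_distrib)
qed

lemma exchange_eq:
  assumes "0 < m1" "0 < m2" "0 < n10" "0 < n20"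
  shows "exchange m1 m2 n10 n20 \<kappa> a b
    = - \<kappa> * (sqrt (m2 * n20) * a - sqrt (m1 * n10) * b)\<^sup>2 / m2"
proof -
  define r1 r2 u1 u2 where "r1 = sqrt n10" "r2 = sqrt n20" "u1 = sqrt m1" "u2 = sqrt m2"
  have pos: "r1 > 0" "r2 > 0" "u1 > 0" "u2 > 0"
    and sq: "n10 = r1\<^sup>2" "n20 = r2\<^sup>2" "m1 = u1\<^sup>2" "m2 = u2\<^sup>2"
    using assms by (simp_all add: r1_r2_u1_u2_def)
  then have sqrt: "sqrt (n10 / n20) = r1 / r2" "sqrt (n20 / n10) = r2 / r1"
    "sqrt (m1 / m2) = u1 / u2" "sqrt (m2 / m1) = u2 / u1"
    "sqrt (m1 * n10) = u1 * r1" "sqrt (m2 * n20) = u2 * r2"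
    by (simp_all add: real_sqrt_divide real_sqrt_mult)
  show ?thesis
    unfolding exchange_def sqrt unfolding sq using pos
    by (simp add: field_simps power2_eq_square)
qed

lemma exchange_le_line_dist2:
  assumes "m2 \<le> m1" "0 < m2" "0 < n10" "0 < n20" "0 \<le> t" "t \<le> \<kappa>"
  shows "exchange m1 m2 n10 n20 \<kappa> a b
    \<le> - (n10 + n20) * t * line_dist2 (sqrt (m1 * n10)) (sqrt (m2 * n20)) a b"
proof -
  define S where "S = m1 * n10 + m2 * n20"
  define Z where "Z = sqrt (m2 * n20) * a - sqrt (m1 * n10) * b"
  have S: "(sqrt (m1 * n10))\<^sup>2 + (sqrt (m2 * n20))\<^sup>2 = S" "0 < S"
    using assms by (simp_all add: S_def add_pos_pos)
  have NS: "(n10 + n20) * m2 \<le> S"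
    using assms unfolding S_def by (simp add: algebra_simps mult_left_mono)
  have "(n10 + n20) * t * m2 \<le> (n10 + n20) * m2 * \<kappa>"
    using assms by (simp add: mult.commute mult.left_commute mult_left_mono)
  also have "\<dots> \<le> S * \<kappa>"
    using NS assms by (simp add: mult_right_mono)
  finally have key: "(n10 + n20) * t / S \<le> \<kappa> / m2"
    using assms S by (simp add: field_simps)
  have "line_dist2 (sqrt (m1 * n10)) (sqrt (m2 * n20)) a b = Z\<^sup>2 / S"
    using line_dist2_eq[of "sqrt (m1 * n10)" "sqrt (m2 * n20)" a b] S unfolding Z_def by simp
  then have "(n10 + n20) * t * line_dist2 (sqrt (m1 * n10)) (sqrt (m2 * n20)) a b
      \<le> \<kappa> / m2 * Z\<^sup>2"
    using mult_right_mono[OF key, of "Z\<^sup>2"] by simp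
  moreover have "exchange m1 m2 n10 n20 \<kappa> a b = - (\<kappa> / m2 * Z\<^sup>2)"
    using assms by (simp add: exchange_eq Z_def)
  ultimately show ?thesis
    unfolding mult_minus_left by linarith
qed

lemma exchange_terms_le:
  assumes "m2 \<le> m1" "0 < m2" "0 < n10" "0 < n20" "0 \<le> t" "t \<le> 1 - \<delta>" "t \<le> 1 - \<omega>"
  shows "(\<Sum>j\<in>{1, 2, 3}. exchange m1 m2 n10 n20 (1 - \<delta>) (a j) (b j))
      + exchange 1 1 n10 n20 (1 - \<omega>) (a 4) (b 4)
    \<le> - (n10 + n20) * t * ((\<Sum>j\<in>{1, 2, 3}. line_dist2 (sqrt (m1 * n10)) (sqrt (m2 * n20)) (a j) (b j))
      + line_dist2 (sqrt n10) (sqrt n20) (a 4) (b 4))"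
proof -
  have "(\<Sum>j\<in>{1, 2, 3}. exchange m1 m2 n10 n20 (1 - \<delta>) (a j) (b j))
      \<le> (\<Sum>j\<in>{1, 2, 3}. - (n10 + n20) * t * line_dist2 (sqrt (m1 * n10)) (sqrt (m2 * n20)) (a j) (b j))"
    using assms by (intro sum_mono exchange_le_line_dist2) auto
  moreover have "exchange 1 1 n10 n20 (1 - \<omega>) (a 4) (b 4)
      \<le> - (n10 + n20) * t * line_dist2 (sqrt n10) (sqrt n20) (a 4) (b 4)"
    using exchange_le_line_dist2[of 1 1 n10 n20 t "1 - \<omega>" "a 4" "b 4"] assms by simp
  ultimately show ?thesis
    unfolding distrib_left sum_distrib_left by linarith
qed

section \<open>The operators in the basis of collision invariants\<close>

(* ebasis m n i is the paper's e_{k,i+1}, for i < 5. *)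
definition ebasis :: "real \<Rightarrow> real \<Rightarrow> nat \<Rightarrow> real^3 \<Rightarrow> real" where
  "ebasis m n i = (if i = 0 then e1 m n else if i = 1 then emom m n 1 else if i = 2 then emom m n 2
      else if i = 3 then emom m n 3 else e5 m n)"

definition ebasis_poly :: "real \<Rightarrow> real \<Rightarrow> nat \<Rightarrow> poly3" where
  "ebasis_poly m n i = (if i = 0 then [(1 / sqrt n, 0, 0, 0)]
      else if i = 1 then [(sqrt (m / n), 1, 0, 0)]
      else if i = 2 then [(sqrt (m / n), 0, 1, 0)]
      else if i = 3 then [(sqrt (m / n), 0, 0, 1)]
      else [(m / sqrt (6 * n), 2, 0, 0), (m / sqrt (6 * n), 0, 2, 0), (m / sqrt (6 * n), 0, 0, 2),
            (- 3 / sqrt (6 * n), 0, 0, 0)])"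

lemma ebasis_eq_sqrt_Mw_poly3: "ebasis m n i v = sqrt (Mw m n v) * poly3_eval (ebasis_poly m n i) v"
  unfolding ebasis_def ebasis_poly_def poly3_eval_def e1_def emom_def e5_def
  by (cases "sqrt (6 * n) = 0") (auto simp: norm_sq_vec3 field_simps)

lemma Mw_measurable [measurable]: "Mw m n \<in> borel_measurable borel"
  unfolding Mw_def by measurable

lemma ebasis_measurable [measurable]: "ebasis m n i \<in> borel_measurable borel"
proof -
  have "e1 m n \<in> borel_measurable borel" "emom m n j \<in> borel_measurable borel"
    "e5 m n \<in> borel_measurable borel" for j
    unfolding e1_def emom_def e5_def by measurable
  then show ?thesis
    unfolding ebasis_def by simp
qed

lemma has_bochner_integral_ebasis_mult:
  assumes "0 < m" "0 < n"
  shows "has_bochner_integral lborel (\<lambda>v. ebasis m n i v * ebasis m n j v)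
    (n * poly3_gaussian_integral m (poly3_mult (ebasis_poly m n i) (ebasis_poly m n j)))"
proof -
  have "ebasis m n i v * ebasis m n j v = Mw m n v * poly3_eval (poly3_mult (ebasis_poly m n i) (ebasis_poly m n j)) v"
    for v
  proof -
    have "sqrt (Mw m n v) * sqrt (Mw m n v) = Mw m n v"
      using assms by (simp add: Mw_def)
    then show ?thesis
      unfolding ebasis_eq_sqrt_Mw_poly3 poly3_eval_mult by (metis mult.assoc mult.left_commute)
  qed
  then show ?thesis
    using has_bochner_integral_Mw_poly3[OF assms(1)] by simp
qed

lemma ebasis_orthonormal:
  assumes "0 < m" "0 < n"
  shows "orthonormal_on {..<5} (ebasis m n)"
proof -
  have vinner: "vinner (ebasis m n i) (ebasis m n j)
      = n * poly3_gaussian_integral m (poly3_mult (ebasis_poly m n i) (ebasis_poly m n j))" for i j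
    unfolding vinner_def using has_bochner_integral_ebasis_mult[OF assms] by (simp add: has_bochner_integral_iff)
  have sq: "square_integrable lborel (ebasis m n i)" for i
    using has_bochner_integral_ebasis_mult[OF assms, of i i]
    by (simp add: square_integrable_def has_bochner_integral_iff power2_eq_square)
  have sqrt: "sqrt (m / n) * sqrt (m / n) = m / n" "1 / sqrt n * (1 / sqrt n) = 1 / n"
     "sqrt (6 * n) * sqrt (6 * n) = 6 * n"
    using assms by (simp_all add: power2_eq_square[symmetric] power_divide)
  have moments: "gaussian_moment m 0 = 1" "gaussian_moment m (Suc 0) = 0"
    "gaussian_moment m (Suc (Suc 0)) = 1 / m" "gaussian_moment m (Suc (Suc (Suc 0))) = 0"
    "gaussian_moment m (Suc (Suc (Suc (Suc 0)))) = 3 / m\<^sup>2"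
    using gaussian_moment_values[OF assms(1)] by (simp_all add: numeral_eq_Suc)
  have "vinner (ebasis m n i) (ebasis m n j) = (if i = j then 1 else 0)" if "i < 5" "j < 5" for i j
  proof -
    have "i = 0 \<or> i = 1 \<or> i = 2 \<or> i = 3 \<or> i = 4" "j = 0 \<or> j = 1 \<or> j = 2 \<or> j = 3 \<or> j = 4"
      using that by auto
    then show ?thesis
      unfolding vinner using assms
      by (elim disjE; simp add: ebasis_poly_def poly3_mult_def poly3_gaussian_integral_def moments;
          simp add: field_simps power2_eq_square sqrt gaussian_moment_values)
  qed
  then show ?thesis
    using sq by (simp add: orthonormal_on_def)
qed

lemma Pk_eq_expansion: "Pk m n f v = (\<Sum>i<5. vinner f (ebasis m n i) * ebasis m n i v)"
  unfolding Pk_def ebasis_def by (simp add: numeral_eq_Suc sum_3 add.assoc)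

definition Lcoeff1 :: "real \<Rightarrow> real \<Rightarrow> real \<Rightarrow> real \<Rightarrow> real \<Rightarrow> real \<Rightarrow>
    (nat \<Rightarrow> real) \<Rightarrow> (nat \<Rightarrow> real) \<Rightarrow> nat \<Rightarrow> real" where
  "Lcoeff1 m1 m2 n10 n20 \<delta> \<omega> a b i = (n10 + n20) * a i + n20 *
     (if i \<in> {1, 2, 3} then (1 - \<delta>) * (sqrt (n10 / n20) * sqrt (m1 / m2) * b i - a i)
      else if i = 4 then (1 - \<omega>) * (sqrt (n10 / n20) * b i - a i) else 0)"

definition Lcoeff2 :: "real \<Rightarrow> real \<Rightarrow> real \<Rightarrow> real \<Rightarrow> real \<Rightarrow> real \<Rightarrow>
    (nat \<Rightarrow> real) \<Rightarrow> (nat \<Rightarrow> real) \<Rightarrow> nat \<Rightarrow> real" where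
  "Lcoeff2 m1 m2 n10 n20 \<delta> \<omega> a b i = (n10 + n20) * b i + n10 *
     (if i \<in> {1, 2, 3} then m1 / m2 * (1 - \<delta>) * (sqrt (n20 / n10) * sqrt (m2 / m1) * a i - b i)
      else if i = 4 then (1 - \<omega>) * (sqrt (n20 / n10) * a i - b i) else 0)"

lemma Lop_eq_expansion:
  fixes m1 m2 n10 n20 \<delta> \<omega> :: real and f1 f2 :: "real^3 \<Rightarrow> real"
  defines "a \<equiv> \<lambda>i. vinner f1 (ebasis m1 n10 i)" and "b \<equiv> \<lambda>i. vinner f2 (ebasis m2 n20 i)"
  shows "fst (Lop m1 m2 n10 n20 \<delta> \<omega> f1 f2) = (\<lambda>v.
      (\<Sum>i<5. Lcoeff1 m1 m2 n10 n20 \<delta> \<omega> a b i * ebasis m1 n10 i v) - (n10 + n20) * f1 v)"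
    and "snd (Lop m1 m2 n10 n20 \<delta> \<omega> f1 f2) = (\<lambda>v.
      (\<Sum>i<5. Lcoeff2 m1 m2 n10 n20 \<delta> \<omega> a b i * ebasis m2 n20 i v) - (n10 + n20) * f2 v)"
  unfolding Lop_def L11_def L12_def L22_def L21_def Pk_eq_expansion Lcoeff1_def Lcoeff2_def a_def b_def
  by (simp_all add: numeral_eq_Suc sum_3 ebasis_def algebra_simps)

lemma Lcoeff_linear:
  obtains \<alpha>1 \<beta>1 \<alpha>2 \<beta>2 :: "nat \<Rightarrow> real"
  where "\<And>a b i. Lcoeff1 m1 m2 n10 n20 \<delta> \<omega> a b i = \<alpha>1 i * a i + \<beta>1 i * b i"
    and "\<And>a b i. Lcoeff2 m1 m2 n10 n20 \<delta> \<omega> a b i = \<alpha>2 i * a i + \<beta>2 i * b i"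
proof
  show "Lcoeff1 m1 m2 n10 n20 \<delta> \<omega> a b i =
      (n10 + n20 - n20 * (if i \<in> {1, 2, 3} then 1 - \<delta> else if i = 4 then 1 - \<omega> else 0)) * a i
    + n20 * (if i \<in> {1, 2, 3} then (1 - \<delta>) * (sqrt (n10 / n20) * sqrt (m1 / m2))
             else if i = 4 then (1 - \<omega>) * sqrt (n10 / n20) else 0) * b i" for a b i
    unfolding Lcoeff1_def by (auto simp: algebra_simps)
  show "Lcoeff2 m1 m2 n10 n20 \<delta> \<omega> a b i =
      n10 * (if i \<in> {1, 2, 3} then m1 / m2 * (1 - \<delta>) * (sqrt (n20 / n10) * sqrt (m2 / m1))
             else if i = 4 then (1 - \<omega>) * sqrt (n20 / n10) else 0) * a i
    + (n10 + n20 - n10 * (if i \<in> {1, 2, 3} then m1 / m2 * (1 - \<delta>) else if i = 4 then 1 - \<omega> else 0)) * b i"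
    for a b i
    unfolding Lcoeff2_def by (auto simp: algebra_simps)
qed

lemma integral_Lop_pairing:
  assumes pos: "0 < m1" "0 < m2" "0 < n10" "0 < n20"
    and f: "square_integrable lborel f1" "square_integrable lborel f2"
  defines "a \<equiv> \<lambda>i. vinner f1 (ebasis m1 n10 i)" and "b \<equiv> \<lambda>i. vinner f2 (ebasis m2 n20 i)"
  shows "(LINT v|lborel. fst (Lop m1 m2 n10 n20 \<delta> \<omega> f1 f2) v * f1 v
                        + snd (Lop m1 m2 n10 n20 \<delta> \<omega> f1 f2) v * f2 v)
    = - (n10 + n20) * ((vinner f1 f1 - (\<Sum>i<5. (a i)\<^sup>2)) + (vinner f2 f2 - (\<Sum>i<5. (b i)\<^sup>2)))
      + (\<Sum>j\<in>{1, 2, 3}. exchange m1 m2 n10 n20 (1 - \<delta>) (a j) (b j))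
      + exchange 1 1 n10 n20 (1 - \<omega>) (a 4) (b 4)"
proof -
  define L1 where "L1 = Lcoeff1 m1 m2 n10 n20 \<delta> \<omega> a b"
  define L2 where "L2 = Lcoeff2 m1 m2 n10 n20 \<delta> \<omega> a b"
  have e1: "\<And>i. i \<in> {..<5} \<Longrightarrow> square_integrable lborel (ebasis m1 n10 i)"
    and e2: "\<And>i. i \<in> {..<5} \<Longrightarrow> square_integrable lborel (ebasis m2 n20 i)"
    using ebasis_orthonormal pos by (simp_all add: orthonormal_on_def)
  note Lop = Lop_eq_expansion[of m1 m2 n10 n20 \<delta> \<omega> f1 f2, folded a_def b_def,
      folded L1_def L2_def]
  have sq: "square_integrable lborel (fst (Lop m1 m2 n10 n20 \<delta> \<omega> f1 f2))"
    "square_integrable lborel (snd (Lop m1 m2 n10 n20 \<delta> \<omega> f1 f2))"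
    unfolding Lop using f e1 e2
    by (auto intro!: square_integrable_diff square_integrable_sum square_integrable_cmult)
  have pairing: "vinner (\<lambda>v. (\<Sum>i<5. c i * e i v) - (n10 + n20) * f v) f
      = (\<Sum>i<5. c i * vinner f (e i)) - (n10 + n20) * vinner f f"
    if f: "square_integrable lborel f" and e: "\<And>i. i \<in> {..<5} \<Longrightarrow> square_integrable lborel (e i)"
    for f c and e :: "nat \<Rightarrow> real^3 \<Rightarrow> real"
  proof -
    have "vinner (\<lambda>v. (\<Sum>i<5. c i * e i v) - (n10 + n20) * f v) f
        = vinner (\<lambda>v. \<Sum>i<5. c i * e i v) f - vinner (\<lambda>v. (n10 + n20) * f v) f"
      using f e by (intro vinner_diff_left square_integrable_sum square_integrable_cmult) auto
    also have "vinner (\<lambda>v. \<Sum>i<5. c i * e i v) f = (\<Sum>i<5. c i * vinner f (e i))"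
      using f e by (subst vinner_commute) (rule vinner_sum_right)
    also have "vinner (\<lambda>v. (n10 + n20) * f v) f = (n10 + n20) * vinner f f"
      by (rule vinner_scale_left)
    finally show ?thesis .
  qed
  have "(LINT v|lborel. fst (Lop m1 m2 n10 n20 \<delta> \<omega> f1 f2) v * f1 v
                        + snd (Lop m1 m2 n10 n20 \<delta> \<omega> f1 f2) v * f2 v)
      = vinner (fst (Lop m1 m2 n10 n20 \<delta> \<omega> f1 f2)) f1 + vinner (snd (Lop m1 m2 n10 n20 \<delta> \<omega> f1 f2)) f2"
    unfolding vinner_def using sq f by (simp add: integrable_mult_square_integrable)
  also have "\<dots> = (\<Sum>i<5. L1 i * a i) - (n10 + n20) * vinner f1 f1
      + ((\<Sum>i<5. L2 i * b i) - (n10 + n20) * vinner f2 f2)"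
    unfolding Lop using pairing[OF f(1) e1, where c = L1] pairing[OF f(2) e2, where c = L2]
    by (simp add: a_def b_def)
  also have "\<dots> = - (n10 + n20) * ((vinner f1 f1 - (\<Sum>i<5. (a i)\<^sup>2)) + (vinner f2 f2 - (\<Sum>i<5. (b i)\<^sup>2)))
      + (\<Sum>j\<in>{1, 2, 3}. exchange m1 m2 n10 n20 (1 - \<delta>) (a j) (b j))
      + exchange 1 1 n10 n20 (1 - \<omega>) (a 4) (b 4)"
    unfolding L1_def L2_def Lcoeff1_def Lcoeff2_def exchange_def
    by (simp add: numeral_eq_Suc algebra_simps power2_eq_square)
  finally show ?thesis .
qed


lemma square_integrable_Pk_residual:
  assumes "0 < m" "0 < n" "square_integrable lborel f"
  shows "square_integrable lborel (\<lambda>v. f v - Pk m n f v)"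
  unfolding Pk_eq_expansion using assms ebasis_orthonormal[OF assms(1,2)]
  by (auto simp: orthonormal_on_def
      intro!: square_integrable_diff square_integrable_sum square_integrable_cmult)

lemma vinner_Pk_residual:
  assumes "0 < m" "0 < n" "square_integrable lborel f"
  shows "vinner (\<lambda>v. f v - Pk m n f v) (\<lambda>v. f v - Pk m n f v)
    = vinner f f - (\<Sum>i<5. (vinner f (ebasis m n i))\<^sup>2)"
  unfolding Pk_eq_expansion
  using vinner_residual_expansion[OF ebasis_orthonormal[OF assms(1,2)] _ assms(3)] by simp

definition ebasis2 :: "real \<Rightarrow> real \<Rightarrow> real \<Rightarrow> real \<Rightarrow> real \<Rightarrow> real \<Rightarrow> nat \<Rightarrow> vfun2" where
  "ebasis2 m1 m2 n10 n20 x y i = ((\<lambda>v. x * ebasis m1 n10 i v), (\<lambda>v. y * ebasis m2 n20 i v))"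

lemma Bvec_eq_ebasis2:
  assumes "0 < m1" "0 < m2" "0 < n10" "0 < n20"
  shows "Bvec m1 m2 n10 n20 0 = ebasis2 m1 m2 n10 n20 (sqrt n10) 0 0"
    and "Bvec m1 m2 n10 n20 1 = ebasis2 m1 m2 n10 n20 0 (sqrt n20) 0"
    and "Bvec m1 m2 n10 n20 2 = ebasis2 m1 m2 n10 n20 (sqrt (m1 * n10)) (sqrt (m2 * n20)) 1"
    and "Bvec m1 m2 n10 n20 3 = ebasis2 m1 m2 n10 n20 (sqrt (m1 * n10)) (sqrt (m2 * n20)) 2"
    and "Bvec m1 m2 n10 n20 4 = ebasis2 m1 m2 n10 n20 (sqrt (m1 * n10)) (sqrt (m2 * n20)) 3"
    and "Bvec m1 m2 n10 n20 5 = ebasis2 m1 m2 n10 n20 (sqrt (6 * n10)) (sqrt (6 * n20)) 4"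
proof -
  have emom: "sqrt (m * n) * emom m n j v = m * v $ j * sqrt (Mw m n v)" if "0 < m" "0 < n" for m n j v
  proof -
    have "sqrt (m * n) * sqrt (m / n) = sqrt (m\<^sup>2)"
      using that by (simp add: real_sqrt_mult[symmetric] power2_eq_square)
    then show ?thesis
      using that unfolding emom_def by (simp add: mult.assoc[symmetric])
  qed
  have e5: "sqrt (6 * n) * e5 m n v = (m * (norm v)\<^sup>2 - 3) * sqrt (Mw m n v)" if "0 < n" for m n v
    using that unfolding e5_def by simp
  have e1: "sqrt n * e1 m n v = sqrt (Mw m n v)" if "0 < n" for m n v
    using that unfolding e1_def by simp
  show "Bvec m1 m2 n10 n20 0 = ebasis2 m1 m2 n10 n20 (sqrt n10) 0 0"
    "Bvec m1 m2 n10 n20 1 = ebasis2 m1 m2 n10 n20 0 (sqrt n20) 0"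
    "Bvec m1 m2 n10 n20 5 = ebasis2 m1 m2 n10 n20 (sqrt (6 * n10)) (sqrt (6 * n20)) 4"
    using assms by (simp_all add: Bvec_def ebasis2_def ebasis_def e1 e5)
  show "Bvec m1 m2 n10 n20 2 = ebasis2 m1 m2 n10 n20 (sqrt (m1 * n10)) (sqrt (m2 * n20)) 1"
    "Bvec m1 m2 n10 n20 3 = ebasis2 m1 m2 n10 n20 (sqrt (m1 * n10)) (sqrt (m2 * n20)) 2"
    "Bvec m1 m2 n10 n20 4 = ebasis2 m1 m2 n10 n20 (sqrt (m1 * n10)) (sqrt (m2 * n20)) 3"
    using assms by (simp_all add: Bvec_def ebasis2_def ebasis_def emom)
qed

lemma square_integrable2_ebasis2:
  "0 < m1 \<Longrightarrow> 0 < m2 \<Longrightarrow> 0 < n10 \<Longrightarrow> 0 < n20 \<Longrightarrow> i < 5 \<Longrightarrow>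
    square_integrable2 (ebasis2 m1 m2 n10 n20 x y i)"
  using ebasis_orthonormal[of m1 n10] ebasis_orthonormal[of m2 n20]
  by (simp add: square_integrable2_def ebasis2_def orthonormal_on_def square_integrable_cmult)

lemma vinner2_ebasis2_right:
  "vinner2 f (ebasis2 m1 m2 n10 n20 x y i)
    = x * vinner (fst f) (ebasis m1 n10 i) + y * vinner (snd f) (ebasis m2 n20 i)"
  unfolding vinner2_def ebasis2_def by (simp add: vinner_scale_right)


lemma vinner2_ebasis2:
  assumes "0 < m1" "0 < m2" "0 < n10" "0 < n20" "i < 5" "j < 5"
  shows "vinner2 (ebasis2 m1 m2 n10 n20 x y i) (ebasis2 m1 m2 n10 n20 x' y' j)
    = (if i = j then x * x' + y * y' else 0)"
proof -
  have "vinner (ebasis m n i) (ebasis m n j) = (if i = j then 1 else 0)" if "0 < m" "0 < n" for m n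
    using ebasis_orthonormal[OF that] assms by (simp add: orthonormal_on_def)
  then show ?thesis
    using assms by (simp add: vinner2_def ebasis2_def vinner_scale_left vinner_scale_right)
qed

lemma orthogonal_family2_Bvec:
  assumes "0 < m1" "0 < m2" "0 < n10" "0 < n20"
  shows "orthogonal_family2 6 (Bvec m1 m2 n10 n20)"
proof -
  have k6: "k < 6 \<longleftrightarrow> k = 0 \<or> k = 1 \<or> k = 2 \<or> k = 3 \<or> k = 4 \<or> k = 5" for k :: nat
    by auto
  have "0 < m1 * n10 + m2 * n20"
    using assms by (simp add: add_pos_pos)
  then show ?thesis
    unfolding orthogonal_family2_def k6
    using assms
    by (auto simp: Bvec_eq_ebasis2 Bvec_eq_ebasis2(2)[unfolded One_nat_def] vinner2_ebasis2 square_integrable2_ebasis2 power2_eq_square)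
qed

lemma Pbig_eq_fourier2:
  assumes "0 < m1" "0 < m2" "0 < n10" "0 < n20" "square_integrable2 f"
  shows "Pbig m1 m2 n10 n20 f = fourier2 6 (Bvec m1 m2 n10 n20) f"
  using the_orthogonal_projection[OF orthogonal_family2_Bvec[OF assms(1-4)] assms(5)]
  by (simp add: Pbig_def lincomb2_def diff2_def)



lemma sum_Bvec_fourier_terms:
  fixes f1 f2 :: "real^3 \<Rightarrow> real"
  assumes pos: "0 < m1" "0 < m2" "0 < n10" "0 < n20"
  defines "a \<equiv> \<lambda>i. vinner f1 (ebasis m1 n10 i)" and "b \<equiv> \<lambda>i. vinner f2 (ebasis m2 n20 i)"
    and "B \<equiv> Bvec m1 m2 n10 n20"
  shows "(\<Sum>k<6. (vinner2 (f1, f2) (B k))\<^sup>2 / vinner2 (B k) (B k))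
    = (\<Sum>i<5. (a i)\<^sup>2) + (\<Sum>i<5. (b i)\<^sup>2)
      - (\<Sum>j\<in>{1, 2, 3}. line_dist2 (sqrt (m1 * n10)) (sqrt (m2 * n20)) (a j) (b j))
      - line_dist2 (sqrt n10) (sqrt n20) (a 4) (b 4)"
proof -
  have fourier_term: "(vinner2 (f1, f2) (ebasis2 m1 m2 n10 n20 x y j))\<^sup>2
      / vinner2 (ebasis2 m1 m2 n10 n20 x y j) (ebasis2 m1 m2 n10 n20 x y j)
      = (a j)\<^sup>2 + (b j)\<^sup>2 - line_dist2 x y (a j) (b j)" if "j < 5" for x y j
  proof -
    have "vinner2 (f1, f2) (ebasis2 m1 m2 n10 n20 x y j) = x * a j + y * b j"
      by (simp add: vinner2_ebasis2_right a_def b_def)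
    moreover have "vinner2 (ebasis2 m1 m2 n10 n20 x y j) (ebasis2 m1 m2 n10 n20 x y j) = x\<^sup>2 + y\<^sup>2"
      using that pos by (simp add: vinner2_ebasis2 power2_eq_square)
    ultimately show ?thesis
      by (simp add: line_dist2_def)
  qed
  have energy: "line_dist2 (sqrt (6 * n10)) (sqrt (6 * n20)) (a 4) (b 4)
      = line_dist2 (sqrt n10) (sqrt n20) (a 4) (b 4)"
    using line_dist2_scale[of "sqrt 6" "sqrt n10" "sqrt n20" "a 4" "b 4"] by (simp add: real_sqrt_mult)
  have "(vinner2 (f1, f2) (B 0))\<^sup>2 / vinner2 (B 0) (B 0) = (a 0)\<^sup>2"
    "(vinner2 (f1, f2) (B 1))\<^sup>2 / vinner2 (B 1) (B 1) = (b 0)\<^sup>2"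
    using pos by (simp_all add: B_def Bvec_eq_ebasis2 Bvec_eq_ebasis2(2)[unfolded One_nat_def]
        fourier_term line_dist2_def power_mult_distrib)
  moreover have "(vinner2 (f1, f2) (B 2))\<^sup>2 / vinner2 (B 2) (B 2)
      = (a 1)\<^sup>2 + (b 1)\<^sup>2 - line_dist2 (sqrt (m1 * n10)) (sqrt (m2 * n20)) (a 1) (b 1)"
    "(vinner2 (f1, f2) (B 3))\<^sup>2 / vinner2 (B 3) (B 3)
      = (a 2)\<^sup>2 + (b 2)\<^sup>2 - line_dist2 (sqrt (m1 * n10)) (sqrt (m2 * n20)) (a 2) (b 2)"
    "(vinner2 (f1, f2) (B 4))\<^sup>2 / vinner2 (B 4) (B 4)
      = (a 3)\<^sup>2 + (b 3)\<^sup>2 - line_dist2 (sqrt (m1 * n10)) (sqrt (m2 * n20)) (a 3) (b 3)"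
    "(vinner2 (f1, f2) (B 5))\<^sup>2 / vinner2 (B 5) (B 5)
      = (a 4)\<^sup>2 + (b 4)\<^sup>2 - line_dist2 (sqrt n10) (sqrt n20) (a 4) (b 4)"
    using pos by (simp_all add: B_def Bvec_eq_ebasis2 fourier_term energy)
  ultimately show ?thesis
    by (simp add: numeral_eq_Suc)
qed

lemma integral_residual_Pbig:
  assumes pos: "0 < m1" "0 < m2" "0 < n10" "0 < n20"
    and f: "square_integrable lborel f1" "square_integrable lborel f2"
  defines "a \<equiv> \<lambda>i. vinner f1 (ebasis m1 n10 i)" and "b \<equiv> \<lambda>i. vinner f2 (ebasis m2 n20 i)"
    and "P \<equiv> Pbig m1 m2 n10 n20 (f1, f2)"
  shows "(LINT v|lborel. (f1 v - fst P v)\<^sup>2 + (f2 v - snd P v)\<^sup>2)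
    = (vinner f1 f1 - (\<Sum>i<5. (a i)\<^sup>2)) + (vinner f2 f2 - (\<Sum>i<5. (b i)\<^sup>2))
      + (\<Sum>j\<in>{1, 2, 3}. line_dist2 (sqrt (m1 * n10)) (sqrt (m2 * n20)) (a j) (b j))
      + line_dist2 (sqrt n10) (sqrt n20) (a 4) (b 4)"
proof -
  define B where "B = Bvec m1 m2 n10 n20"
  define r where "r = diff2 (f1, f2) P"
  have f_pair: "square_integrable2 (f1, f2)"
    using f by (simp add: square_integrable2_def)
  have B: "orthogonal_family2 6 B"
    unfolding B_def by (rule orthogonal_family2_Bvec[OF pos])
  have P: "P = fourier2 6 B (f1, f2)"
    unfolding P_def B_def by (rule Pbig_eq_fourier2[OF pos f_pair])
  have r: "square_integrable2 r"
    unfolding r_def P fourier2_def using B f_pair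
    by (auto intro!: square_integrable2_diff2 square_integrable2_lincomb2 simp: orthogonal_family2_def)
  have "(LINT v|lborel. (f1 v - fst P v)\<^sup>2 + (f2 v - snd P v)\<^sup>2) = vinner2 r r"
    using r by (simp add: r_def diff2_def vinner2_def integral_sum_squares square_integrable2_def)
  also have "\<dots> = vinner2 (f1, f2) (f1, f2) - (\<Sum>k<6. (vinner2 (f1, f2) (B k))\<^sup>2 / vinner2 (B k) (B k))"
    unfolding r_def P by (rule vinner2_residual_fourier2[OF B f_pair])
  finally show ?thesis
    using sum_Bvec_fourier_terms[OF pos, of f1 f2] unfolding B_def a_def b_def
    by (simp add: vinner2_def)
qed

lemma velocity_coercivity:
  assumes masses: "m2 \<le> m1" "0 < m2" and dens: "0 < n10" "0 < n20"
    and "0 \<le> \<delta>" "\<delta> < 1" "0 \<le> \<omega>" "\<omega> < 1"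
    and f: "square_integrable lborel f1" "square_integrable lborel f2"
  defines "P \<equiv> Pbig m1 m2 n10 n20 (f1, f2)"
  shows "(LINT v|lborel. fst (Lop m1 m2 n10 n20 \<delta> \<omega> f1 f2) v * f1 v
                        + snd (Lop m1 m2 n10 n20 \<delta> \<omega> f1 f2) v * f2 v)
    \<le> - (n10 + n20) *
        (max \<delta> \<omega> * (LINT v|lborel. (f1 v - Pk m1 n10 f1 v)\<^sup>2 + (f2 v - Pk m2 n20 f2 v)\<^sup>2)
       + min (1 - \<delta>) (1 - \<omega>) * (LINT v|lborel. (f1 v - fst P v)\<^sup>2 + (f2 v - snd P v)\<^sup>2))"
proof -
  have pos: "0 < m1" "0 < m2" "0 < n10" "0 < n20"
    using assms by auto
  define a where "a i = vinner f1 (ebasis m1 n10 i)" for i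
  define b where "b i = vinner f2 (ebasis m2 n20 i)" for i
  define N where "N = n10 + n20"
  define t where "t = min (1 - \<delta>) (1 - \<omega>)"
  define R where "R = (vinner f1 f1 - (\<Sum>i<5. (a i)\<^sup>2)) + (vinner f2 f2 - (\<Sum>i<5. (b i)\<^sup>2))"
  define D where "D = (\<Sum>j\<in>{1, 2, 3}. line_dist2 (sqrt (m1 * n10)) (sqrt (m2 * n20)) (a j) (b j))
    + line_dist2 (sqrt n10) (sqrt n20) (a 4) (b 4)"
  define X where "X = (\<Sum>j\<in>{1, 2, 3}. exchange m1 m2 n10 n20 (1 - \<delta>) (a j) (b j))
    + exchange 1 1 n10 n20 (1 - \<omega>) (a 4) (b 4)"
  have t: "0 \<le> t" "t \<le> 1 - \<delta>" "t \<le> 1 - \<omega>" "max \<delta> \<omega> = 1 - t"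
    unfolding t_def using assms by (auto simp: min_def max_def)
  have pairing: "(LINT v|lborel. fst (Lop m1 m2 n10 n20 \<delta> \<omega> f1 f2) v * f1 v
      + snd (Lop m1 m2 n10 n20 \<delta> \<omega> f1 f2) v * f2 v) = - N * R + X"
    using integral_Lop_pairing[OF pos f] unfolding N_def R_def X_def a_def b_def
    by (simp only: add.assoc)
  have Pk_residual: "(LINT v|lborel. (f1 v - Pk m1 n10 f1 v)\<^sup>2 + (f2 v - Pk m2 n20 f2 v)\<^sup>2) = R"
    unfolding R_def a_def b_def
    using integral_sum_squares[OF square_integrable_Pk_residual[OF pos(1,3) f(1)]
        square_integrable_Pk_residual[OF pos(2,4) f(2)]]
      vinner_Pk_residual[OF pos(1,3) f(1)] vinner_Pk_residual[OF pos(2,4) f(2)]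
    by simp
  have P_residual: "(LINT v|lborel. (f1 v - fst P v)\<^sup>2 + (f2 v - snd P v)\<^sup>2) = R + D"
    using integral_residual_Pbig[OF pos f] unfolding P_def R_def D_def a_def b_def
    by (simp only: add.assoc)
  have "X \<le> - N * t * D"
    unfolding X_def D_def N_def using exchange_terms_le[OF masses dens t(1-3)] .
  moreover have "- N * ((1 - t) * R + t * (R + D)) = - N * R + - N * t * D"
    by (simp add: algebra_simps)
  ultimately show ?thesis
    unfolding pairing Pk_residual P_residual N_def[symmetric] t_def[symmetric] t(4)
    by linarith
qed

section \<open>Integration over the torus\<close>

lemma (in pair_sigma_finite) AE_square_integrable_Pair:
  assumes "square_integrable (M1 \<Otimes>\<^sub>M M2) g"
  shows "AE x in M1. square_integrable M2 (\<lambda>y. g (x, y))"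
  using AE_integrable_fst'[of "\<lambda>z. (g z)\<^sup>2"] assms measurable_Pair2[of g]
  by (auto simp: square_integrable_def)

lemma (in pair_sigma_finite) integral_fst_minorant:
  fixes k :: "'a \<times> 'b \<Rightarrow> real"
  assumes k: "\<And>z. 0 \<le> k z"
  obtains K where "integrable M1 K" "integral\<^sup>L M1 K = integral\<^sup>L (M1 \<Otimes>\<^sub>M M2) k"
    "\<And>x. 0 \<le> K x" "\<And>x. K x \<le> (\<integral>y. k (x, y) \<partial>M2)"
proof -
  have section_nonneg: "0 \<le> (\<integral>y. k (x, y) \<partial>M2)" for x
    using k by (simp add: Bochner_Integration.integral_nonneg)
  show ?thesis
  proof (cases "integrable (M1 \<Otimes>\<^sub>M M2) k")
    case True
    show ?thesis
      by (rule that[of "\<lambda>x. \<integral>y. k (x, y) \<partial>M2"])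
        (simp_all add: integrable_fst'[OF True] integral_fst'[OF True] section_nonneg)
  next
    case False
    show ?thesis
      by (rule that[of "\<lambda>_. 0"]) (simp_all add: not_integrable_integral_eq[OF False] section_nonneg)
  qed
qed

(* g and h need not be integrable: a non-integrable function has integral 0, and can then be
   replaced by 0 in the bound. *)
lemma (in pair_sigma_finite) integral_le_of_sections:
  fixes f g h :: "'a \<times> 'b \<Rightarrow> real"
  assumes f: "integrable (M1 \<Otimes>\<^sub>M M2) f"
    and nonneg: "\<And>z. 0 \<le> g z" "\<And>z. 0 \<le> h z" "0 \<le> c" "0 \<le> d"
    and le: "AE x in M1. (\<integral>y. f (x, y) \<partial>M2) \<le> - (c * (\<integral>y. g (x, y) \<partial>M2) + d * (\<integral>y. h (x, y) \<partial>M2))"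
  shows "integral\<^sup>L (M1 \<Otimes>\<^sub>M M2) f
    \<le> - (c * integral\<^sup>L (M1 \<Otimes>\<^sub>M M2) g + d * integral\<^sup>L (M1 \<Otimes>\<^sub>M M2) h)"
proof -
  obtain G where G: "integrable M1 G" "integral\<^sup>L M1 G = integral\<^sup>L (M1 \<Otimes>\<^sub>M M2) g"
    "\<And>x. 0 \<le> G x" "\<And>x. G x \<le> (\<integral>y. g (x, y) \<partial>M2)"
    by (rule integral_fst_minorant[of g, OF nonneg(1)]) blast
  obtain H where H: "integrable M1 H" "integral\<^sup>L M1 H = integral\<^sup>L (M1 \<Otimes>\<^sub>M M2) h"
    "\<And>x. 0 \<le> H x" "\<And>x. H x \<le> (\<integral>y. h (x, y) \<partial>M2)"
    by (rule integral_fst_minorant[of h, OF nonneg(2)]) blast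
  have "integral\<^sup>L (M1 \<Otimes>\<^sub>M M2) f = (\<integral>x. (\<integral>y. f (x, y) \<partial>M2) \<partial>M1)"
    by (rule integral_fst'[OF f, symmetric])
  also have "\<dots> \<le> (\<integral>x. - (c * G x + d * H x) \<partial>M1)"
  proof (rule integral_mono_AE)
    show "integrable M1 (\<lambda>x. \<integral>y. f (x, y) \<partial>M2)"
      by (rule integrable_fst'[OF f])
    show "integrable M1 (\<lambda>x. - (c * G x + d * H x))"
      using G(1) H(1) by simp
    show "AE x in M1. (\<integral>y. f (x, y) \<partial>M2) \<le> - (c * G x + d * H x)"
      using le
    proof eventually_elim
      case (elim x)
      have "c * G x + d * H x \<le> c * (\<integral>y. g (x, y) \<partial>M2) + d * (\<integral>y. h (x, y) \<partial>M2)"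
        using mult_left_mono[OF G(4) nonneg(3)] mult_left_mono[OF H(4) nonneg(4)] by (rule add_mono)
      with elim show ?case by linarith
    qed
  qed
  also have "\<dots> = - (c * integral\<^sup>L M1 G + d * integral\<^sup>L M1 H)"
    using G(1) H(1) by simp
  finally show ?thesis
    unfolding G(2) H(2) .
qed

lemma integrable_vinner_section_mult:
  fixes h g :: "(real^3) \<times> (real^3) \<Rightarrow> real" and e e' :: "real^3 \<Rightarrow> real"
  assumes h: "square_integrable (lborel \<Otimes>\<^sub>M lborel) h"
    and g: "square_integrable (lborel \<Otimes>\<^sub>M lborel) g"
    and e: "square_integrable lborel e" "vinner e e = 1"
    and e': "square_integrable lborel e'" "vinner e' e' = 1"
  shows "integrable (lborel \<Otimes>\<^sub>M lborel) (\<lambda>z. vinner (\<lambda>v. h (fst z, v)) e' * e (snd z) * g z)"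
proof -
  have [measurable]: "h \<in> borel_measurable (lborel \<Otimes>\<^sub>M lborel)" "g \<in> borel_measurable (lborel \<Otimes>\<^sub>M lborel)"
    "e \<in> borel_measurable lborel" "e' \<in> borel_measurable lborel"
    using h g e e' by (auto simp: square_integrable_def)
  define A where "A x = vinner (\<lambda>v. h (x, v)) e'" for x
  define F where "F z = A (fst z) * e (snd z) * g z" for z
  have [measurable]: "A \<in> borel_measurable lborel"
    unfolding A_def vinner_def by measurable
  define Nh where "Nh x = (LINT v|lborel. (h (x, v))\<^sup>2)" for x
  define Ng where "Ng x = (LINT v|lborel. (g (x, v))\<^sup>2)" for x
  have "integrable lborel Nh" "integrable lborel Ng"
    unfolding Nh_def[abs_def] Ng_def[abs_def]
    using lborel_pair.integrable_fst'[of "\<lambda>z. (h z)\<^sup>2"] lborel_pair.integrable_fst'[of "\<lambda>z. (g z)\<^sup>2"] h g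
    by (auto simp: square_integrable_def)
  have section_bound: "(LINT v|lborel. \<bar>F (x, v)\<bar>) \<le> (Nh x + Ng x) / 2"
    if hx: "square_integrable lborel (\<lambda>v. h (x, v))" and gx: "square_integrable lborel (\<lambda>v. g (x, v))"
    for x
  proof -
    define I where "I = (LINT v|lborel. \<bar>e v\<bar> * \<bar>g (x, v)\<bar>)"
    have "(A x)\<^sup>2 \<le> Nh x"
      using vinner_unit_sq_le[OF hx e'] unfolding A_def Nh_def by (simp add: vinner_self)
    moreover have "I\<^sup>2 \<le> Ng x"
      using vinner_unit_sq_le[OF square_integrable_abs[OF gx] square_integrable_abs[OF e(1)]] e(2)
      unfolding I_def Ng_def by (simp add: vinner_def mult.commute abs_mult_self_eq power2_eq_square)
    moreover have "2 * (\<bar>A x\<bar> * I) \<le> (A x)\<^sup>2 + I\<^sup>2"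
      using sum_squares_bound[of "\<bar>A x\<bar>" I] by (simp add: power2_eq_square)
    moreover have "(LINT v|lborel. \<bar>F (x, v)\<bar>) = \<bar>A x\<bar> * I"
      unfolding F_def I_def by (simp add: abs_mult mult.assoc)
    ultimately have "2 * (LINT v|lborel. \<bar>F (x, v)\<bar>) \<le> Nh x + Ng x"
      by linarith
    then show ?thesis
      by simp
  qed
  have "integrable (lborel \<Otimes>\<^sub>M lborel) F"
  proof (rule lborel_pair.Fubini_integrable)
    show "F \<in> borel_measurable (lborel \<Otimes>\<^sub>M lborel)"
      unfolding F_def by measurable
    show "AE x in lborel. integrable lborel (\<lambda>v. F (x, v))"
      using lborel_pair.AE_square_integrable_Pair[OF g]
    proof eventually_elim
      case (elim x)
      then show ?case
        using integrable_mult_square_integrable[OF e(1) elim] by (simp add: F_def mult.assoc)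
    qed
    show "integrable lborel (\<lambda>x. LINT v|lborel. norm (F (x, v)))"
    proof (rule Bochner_Integration.integrable_bound)
      show "integrable lborel (\<lambda>x. (Nh x + Ng x) / 2)"
        using \<open>integrable lborel Nh\<close> \<open>integrable lborel Ng\<close> by auto
      show "(\<lambda>x. LINT v|lborel. norm (F (x, v))) \<in> borel_measurable lborel"
        unfolding F_def by measurable
      show "AE x in lborel. norm (LINT v|lborel. norm (F (x, v))) \<le> norm ((Nh x + Ng x) / 2)"
        using lborel_pair.AE_square_integrable_Pair[OF h] lborel_pair.AE_square_integrable_Pair[OF g]
      proof eventually_elim
        case (elim x)
        have "0 \<le> Nh x" "0 \<le> Ng x"
          by (simp_all add: Nh_def Ng_def)
        then show ?case
          using section_bound[OF elim] by simp
      qed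
    qed
  qed
  then show ?thesis
    unfolding F_def A_def by simp
qed

lemma integrable_Lop_pairing:
  fixes g1 g2 :: "(real^3) \<times> (real^3) \<Rightarrow> real"
  assumes pos: "0 < m1" "0 < m2" "0 < n10" "0 < n20"
    and g: "square_integrable (lborel \<Otimes>\<^sub>M lborel) g1" "square_integrable (lborel \<Otimes>\<^sub>M lborel) g2"
  shows "integrable (lborel \<Otimes>\<^sub>M lborel) (\<lambda>z.
            fst (Lop m1 m2 n10 n20 \<delta> \<omega> (\<lambda>v. g1 (fst z, v)) (\<lambda>v. g2 (fst z, v))) (snd z) * g1 z
          + snd (Lop m1 m2 n10 n20 \<delta> \<omega> (\<lambda>v. g1 (fst z, v)) (\<lambda>v. g2 (fst z, v))) (snd z) * g2 z)"
proof -
  obtain \<alpha>1 \<beta>1 \<alpha>2 \<beta>2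
    where L1: "\<And>a b i. Lcoeff1 m1 m2 n10 n20 \<delta> \<omega> a b i = \<alpha>1 i * a i + \<beta>1 i * b i"
      and L2: "\<And>a b i. Lcoeff2 m1 m2 n10 n20 \<delta> \<omega> a b i = \<alpha>2 i * a i + \<beta>2 i * b i"
    using Lcoeff_linear[of m1 m2 n10 n20 \<delta> \<omega>] by blast
  define E1 where "E1 = ebasis m1 n10"
  define E2 where "E2 = ebasis m2 n20"
  define T where "T h e e' g z = vinner (\<lambda>v. h (fst z, v)) e' * e (snd z) * g z"
    for h g :: "(real^3) \<times> (real^3) \<Rightarrow> real" and e e' :: "real^3 \<Rightarrow> real" and z
  have unit: "square_integrable lborel (E i)" "vinner (E i) (E i) = 1"
    if "E = E1 \<or> E = E2" "i < 5" for E i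
    using that ebasis_orthonormal[of m1 n10] ebasis_orthonormal[of m2 n20] pos
    by (auto simp: E1_def E2_def orthonormal_on_def)
  have T: "integrable (lborel \<Otimes>\<^sub>M lborel) (T h (E i) (E' i) g)"
    if "h = g1 \<or> h = g2" "g = g1 \<or> g = g2" "E = E1 \<or> E = E2" "E' = E1 \<or> E' = E2" "i < 5"
    for h g E E' i
  proof -
    have "square_integrable (lborel \<Otimes>\<^sub>M lborel) h" "square_integrable (lborel \<Otimes>\<^sub>M lborel) g"
      using that g by auto
    then show ?thesis
      unfolding T_def using unit that by (intro integrable_vinner_section_mult) auto
  qed
  have "(\<lambda>z. fst (Lop m1 m2 n10 n20 \<delta> \<omega> (\<lambda>v. g1 (fst z, v)) (\<lambda>v. g2 (fst z, v))) (snd z) * g1 z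
          + snd (Lop m1 m2 n10 n20 \<delta> \<omega> (\<lambda>v. g1 (fst z, v)) (\<lambda>v. g2 (fst z, v))) (snd z) * g2 z)
     = (\<lambda>z. (\<Sum>i<5. \<alpha>1 i * T g1 (E1 i) (E1 i) g1 z + \<beta>1 i * T g2 (E1 i) (E2 i) g1 z)
            - (n10 + n20) * (g1 z)\<^sup>2
          + ((\<Sum>i<5. \<alpha>2 i * T g1 (E2 i) (E1 i) g2 z + \<beta>2 i * T g2 (E2 i) (E2 i) g2 z)
            - (n10 + n20) * (g2 z)\<^sup>2))"
    unfolding Lop_eq_expansion L1 L2
    by (simp add: T_def E1_def E2_def sum_distrib_left algebra_simps power2_eq_square)
  moreover have "integrable (lborel \<Otimes>\<^sub>M lborel) (\<lambda>z.
        (\<Sum>i<5. \<alpha>1 i * T g1 (E1 i) (E1 i) g1 z + \<beta>1 i * T g2 (E1 i) (E2 i) g1 z)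
            - (n10 + n20) * (g1 z)\<^sup>2
          + ((\<Sum>i<5. \<alpha>2 i * T g1 (E2 i) (E1 i) g2 z + \<beta>2 i * T g2 (E2 i) (E2 i) g2 z)
            - (n10 + n20) * (g2 z)\<^sup>2))"
    using g unfolding square_integrable_def
    by (intro Bochner_Integration.integrable_add Bochner_Integration.integrable_diff
        Bochner_Integration.integrable_sum integrable_mult_right T) auto
  ultimately show ?thesis
    by simp
qed

definition unit_cube :: "(real^3) set" where
  "unit_cube = {x. \<forall>i. 0 \<le> x $ i \<and> x $ i \<le> 1}"

lemma torus_dom_eq: "torus_dom = unit_cube \<times> UNIV"
  unfolding torus_dom_def unit_cube_def ..

lemma sets_torus_dom: "torus_dom \<in> sets (lborel \<Otimes>\<^sub>M lborel)" "torus_dom \<in> sets lborel"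
proof -
  have cube: "unit_cube = cbox 0 (\<chi> i. 1)"
    unfolding unit_cube_def by (auto simp: mem_box_cart)
  have "unit_cube \<in> sets lborel"
    unfolding cube by simp
  then show "torus_dom \<in> sets (lborel \<Otimes>\<^sub>M lborel)"
    unfolding torus_dom_eq by (intro pair_measureI) auto
  then show "torus_dom \<in> sets lborel"
    unfolding lborel_prod .
qed

lemma set_integral_torus_eq:
  fixes F :: "(real^3) \<times> (real^3) \<Rightarrow> real"
  shows "set_lebesgue_integral lborel torus_dom F
    = integral\<^sup>L (lborel \<Otimes>\<^sub>M lborel) (\<lambda>z. indicator torus_dom z * F z)"
  unfolding set_lebesgue_integral_def lborel_prod[symmetric] by (simp add: real_scaleR_def)

lemma coercivity_on_torus:
  fixes g1 g2 :: "(real^3) \<times> (real^3) \<Rightarrow> real"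
  assumes prm: "m2 \<le> m1" "0 < m2" "0 < n10" "0 < n20" "0 \<le> \<delta>" "\<delta> < 1" "0 \<le> \<omega>" "\<omega> < 1"
    and g: "square_integrable (lborel \<Otimes>\<^sub>M lborel) g1" "square_integrable (lborel \<Otimes>\<^sub>M lborel) g2"
  defines "P z \<equiv> Pbig m1 m2 n10 n20 ((\<lambda>v. g1 (fst z, v)), (\<lambda>v. g2 (fst z, v)))"
  shows "(LINT z:torus_dom|lborel.
            fst (Lop m1 m2 n10 n20 \<delta> \<omega> (\<lambda>v. g1 (fst z, v)) (\<lambda>v. g2 (fst z, v))) (snd z) * g1 z
          + snd (Lop m1 m2 n10 n20 \<delta> \<omega> (\<lambda>v. g1 (fst z, v)) (\<lambda>v. g2 (fst z, v))) (snd z) * g2 z)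
    \<le> - (n10 + n20) *
        (max \<delta> \<omega> *
           (LINT z:torus_dom|lborel.
              (g1 z - Pk m1 n10 (\<lambda>v. g1 (fst z, v)) (snd z))\<^sup>2
            + (g2 z - Pk m2 n20 (\<lambda>v. g2 (fst z, v)) (snd z))\<^sup>2)
       + min (1 - \<delta>) (1 - \<omega>) *
           (LINT z:torus_dom|lborel. (g1 z - fst (P z) (snd z))\<^sup>2 + (g2 z - snd (P z) (snd z))\<^sup>2))"
proof -
  have pos: "0 < m1" "0 < m2" "0 < n10" "0 < n20"
    using prm by auto
  define H where "H z = fst (Lop m1 m2 n10 n20 \<delta> \<omega> (\<lambda>v. g1 (fst z, v)) (\<lambda>v. g2 (fst z, v))) (snd z) * g1 z
    + snd (Lop m1 m2 n10 n20 \<delta> \<omega> (\<lambda>v. g1 (fst z, v)) (\<lambda>v. g2 (fst z, v))) (snd z) * g2 z" for z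
  define A where "A z = (g1 z - Pk m1 n10 (\<lambda>v. g1 (fst z, v)) (snd z))\<^sup>2
    + (g2 z - Pk m2 n20 (\<lambda>v. g2 (fst z, v)) (snd z))\<^sup>2" for z
  define B where "B z = (g1 z - fst (P z) (snd z))\<^sup>2 + (g2 z - snd (P z) (snd z))\<^sup>2" for z
  have cut: "(\<integral>v. indicator torus_dom (x, v) * F (x, v) \<partial>lborel)
      = indicator unit_cube x * (\<integral>v. F (x, v) \<partial>lborel)" for F :: "_ \<Rightarrow> real" and x
    unfolding torus_dom_eq by (simp add: indicator_times)
  have "integrable (lborel \<Otimes>\<^sub>M lborel) (\<lambda>z. indicator torus_dom z * H z)"
    using integrable_real_mult_indicator[OF sets_torus_dom(1) integrable_Lop_pairing[OF pos g]]
    by (simp add: H_def mult.commute)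
  then have "integral\<^sup>L (lborel \<Otimes>\<^sub>M lborel) (\<lambda>z. indicator torus_dom z * H z)
      \<le> - ((n10 + n20) * max \<delta> \<omega> * integral\<^sup>L (lborel \<Otimes>\<^sub>M lborel) (\<lambda>z. indicator torus_dom z * A z)
        + (n10 + n20) * min (1 - \<delta>) (1 - \<omega>) * integral\<^sup>L (lborel \<Otimes>\<^sub>M lborel) (\<lambda>z. indicator torus_dom z * B z))"
  proof (rule lborel_pair.integral_le_of_sections)
    show "0 \<le> indicator torus_dom z * A z" "0 \<le> indicator torus_dom z * B z" for z
      by (simp_all add: A_def B_def)
    show "0 \<le> (n10 + n20) * max \<delta> \<omega>" "0 \<le> (n10 + n20) * min (1 - \<delta>) (1 - \<omega>)"
      using prm by simp_all
    show "AE x in lborel. (\<integral>v. indicator torus_dom (x, v) * H (x, v) \<partial>lborel)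
        \<le> - ((n10 + n20) * max \<delta> \<omega> * (\<integral>v. indicator torus_dom (x, v) * A (x, v) \<partial>lborel)
          + (n10 + n20) * min (1 - \<delta>) (1 - \<omega>) * (\<integral>v. indicator torus_dom (x, v) * B (x, v) \<partial>lborel))"
      using lborel_pair.AE_square_integrable_Pair[OF g(1)] lborel_pair.AE_square_integrable_Pair[OF g(2)]
    proof eventually_elim
      case (elim x)
      have "(\<integral>v. H (x, v) \<partial>lborel) \<le> - (n10 + n20) * (max \<delta> \<omega> * (\<integral>v. A (x, v) \<partial>lborel)
          + min (1 - \<delta>) (1 - \<omega>) * (\<integral>v. B (x, v) \<partial>lborel))"
        using velocity_coercivity[OF prm elim] by (simp add: H_def A_def B_def P_def)
      then show ?case
        unfolding cut by (cases "x \<in> unit_cube") (simp_all add: algebra_simps)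
    qed
  qed
  then show ?thesis
    unfolding set_integral_torus_eq H_def A_def B_def by (simp add: algebra_simps)
qed

(* L2_tv constrains f only on torus_dom, so f is replaced by its extension by zero. *)
lemma square_integrable_torus_cutoff:
  assumes "L2_tv f"
  shows "square_integrable (lborel \<Otimes>\<^sub>M lborel) (\<lambda>z. indicator torus_dom z * f z)"
proof -
  have "(\<lambda>z. (indicator torus_dom z * f z)\<^sup>2) = (\<lambda>z. indicator torus_dom z *\<^sub>R (f z)\<^sup>2)"
    by (auto simp: indicator_def fun_eq_iff)
  then show ?thesis
    using assms unfolding L2_tv_def set_borel_measurable_def set_integrable_def square_integrable_def
    by (simp add: lborel_prod[symmetric])
qed

lemma set_integral_torus_cutoff_cong:
  fixes f1 f2 :: "(real^3) \<times> (real^3) \<Rightarrow> real"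
    and \<Phi> :: "(real^3 \<Rightarrow> real) \<Rightarrow> (real^3 \<Rightarrow> real) \<Rightarrow> real^3 \<Rightarrow> real \<Rightarrow> real \<Rightarrow> real"
  defines "g1 \<equiv> \<lambda>z. indicator torus_dom z * f1 z" and "g2 \<equiv> \<lambda>z. indicator torus_dom z * f2 z"
  shows "(LINT z:torus_dom|lborel. \<Phi> (\<lambda>v. f1 (fst z, v)) (\<lambda>v. f2 (fst z, v)) (snd z) (f1 z) (f2 z))
    = (LINT z:torus_dom|lborel. \<Phi> (\<lambda>v. g1 (fst z, v)) (\<lambda>v. g2 (fst z, v)) (snd z) (g1 z) (g2 z))"
proof (rule set_lebesgue_integral_cong[OF sets_torus_dom(2)], intro allI impI)
  show "\<Phi> (\<lambda>v. f1 (fst z, v)) (\<lambda>v. f2 (fst z, v)) (snd z) (f1 z) (f2 z)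
      = \<Phi> (\<lambda>v. g1 (fst z, v)) (\<lambda>v. g2 (fst z, v)) (snd z) (g1 z) (g2 z)"
    if "z \<in> torus_dom" for z
    using that by (auto simp: g1_def g2_def torus_dom_eq)
qed

theorem proposition3p1:
  fixes m1 m2 n10 n20 \<delta> \<omega> :: real
    and f1 f2 :: "(real^3) \<times> (real^3) \<Rightarrow> real"
  assumes "m1 \<ge> m2" "m2 > 0" "n10 > 0" "n20 > 0"
    and "0 \<le> \<delta>" "\<delta> < 1" "0 \<le> \<omega>" "\<omega> < 1"
    and "L2_tv f1" "L2_tv f2"
  shows "(LINT z:torus_dom|lborel.
            fst (Lop m1 m2 n10 n20 \<delta> \<omega> (\<lambda>v. f1 (fst z, v)) (\<lambda>v. f2 (fst z, v))) (snd z) * f1 z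
          + snd (Lop m1 m2 n10 n20 \<delta> \<omega> (\<lambda>v. f1 (fst z, v)) (\<lambda>v. f2 (fst z, v))) (snd z) * f2 z)
    \<le> - (n10 + n20) *
        (max \<delta> \<omega> *
           (LINT z:torus_dom|lborel.
              (f1 z - Pk m1 n10 (\<lambda>v. f1 (fst z, v)) (snd z))\<^sup>2
            + (f2 z - Pk m2 n20 (\<lambda>v. f2 (fst z, v)) (snd z))\<^sup>2)
       + min (1 - \<delta>) (1 - \<omega>) *
           (LINT z:torus_dom|lborel.
              (f1 z - fst (Pbig m1 m2 n10 n20 ((\<lambda>v. f1 (fst z, v)), (\<lambda>v. f2 (fst z, v)))) (snd z))\<^sup>2
            + (f2 z - snd (Pbig m1 m2 n10 n20 ((\<lambda>v. f1 (fst z, v)), (\<lambda>v. f2 (fst z, v)))) (snd z))\<^sup>2))"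
proof -
  note cong = set_integral_torus_cutoff_cong[of _ f1 f2]
  show ?thesis
    unfolding cong[of "\<lambda>s1 s2 v y1 y2. fst (Lop m1 m2 n10 n20 \<delta> \<omega> s1 s2) v * y1
                                    + snd (Lop m1 m2 n10 n20 \<delta> \<omega> s1 s2) v * y2"]
      cong[of "\<lambda>s1 s2 v y1 y2. (y1 - Pk m1 n10 s1 v)\<^sup>2 + (y2 - Pk m2 n20 s2 v)\<^sup>2"]
      cong[of "\<lambda>s1 s2 v y1 y2. (y1 - fst (Pbig m1 m2 n10 n20 (s1, s2)) v)\<^sup>2
                               + (y2 - snd (Pbig m1 m2 n10 n20 (s1, s2)) v)\<^sup>2"]
    using assms
    by (intro coercivity_on_torus square_integrable_torus_cutoff) auto
qed

end
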